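(* Let $S=p_1,\ldots,p_n$ have independent entries uniform on $[0,1]$, let the deletion probability satisfy $\delta<10^{-7}$, and let $m>n$. Run Algorithm 1 (described in the context) on independent trace sets $X$ and $Y$ of $S$ with $|X|=m^2$, $|Y|=m^{25}$. Then with probability at least $1-O(m^{-0.2})$, every chunk $M_x$ returned by Algorithm 1 is deletion-free.
   Context: A trace is generated from $S$ by sampling independent bits $t_k$ with $\Pr[t_k=1]=p_k$, deleting each independently with probability $\delta$, and concatenating survivors; each surviving bit originates from a specific original position. Let $w=10000\log m$ (natural logarithm). Two length-$w$ binary segments "match" if their Hamming ($\ell_1$) distance is at most $5w/12$. Algorithm 1: for each trace $x\in X$, draw $i$ uniformly from $\{1,\ldots,n-3w+1\}$ and set $L_x=x_{i..i+w-1}$, $M_x=x_{i+w..i+2w-1}$, $R_x=x_{i+2w..i+3w-1}$. Return $M_x$ iff (1) there exist $y\in Y$ and an index $j$ such that $L_x$ matches $y_{j..j+w-1}$ and $R_x$ matches $y_{j+2w..j+3w-1}$, and (2) there do not exist $y\in Y$ and indices $j,j'$ with $j'-j>2w$ such that $L_x$ matches $y_{j..j+w-1}$ and $R_x$ matches $y_{j'..j'+w-1}$ (windows extending beyond the end of a trace are not considered). A chunk $M_x$ is deletion-free if its $w$ bits originate from $w$ consecutive original positions of $S$. *)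

theory Defs
  imports "HOL-Probability.Probability"
begin

text \<open>A trace is a list of surviving bits, each tagged with the (0-based) original
  position of S it originates from.\<close>
type_synonym trace = "(bool \<times> nat) list"

fun list_pmf :: "'a pmf list \<Rightarrow> 'a list pmf" where
  "list_pmf [] = return_pmf []"
| "list_pmf (q # qs) = bind_pmf q (\<lambda>x. bind_pmf (list_pmf qs) (\<lambda>xs. return_pmf (x # xs)))"

definition pos_pmf :: "real \<Rightarrow> (nat \<Rightarrow> real) \<Rightarrow> nat \<Rightarrow> trace pmf" where
  "pos_pmf \<delta> p k =
     bind_pmf (bernoulli_pmf (p k)) (\<lambda>t.
     bind_pmf (bernoulli_pmf \<delta>) (\<lambda>d.
     return_pmf (if d then [] else [(t, k)])))"

definition trace_pmf :: "real \<Rightarrow> nat \<Rightarrow> (nat \<Rightarrow> real) \<Rightarrow> trace pmf" where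
  "trace_pmf \<delta> n p = map_pmf concat (list_pmf (map (pos_pmf \<delta> p) [0..<n]))"

definition win_len :: "nat \<Rightarrow> nat" where
  "win_len m = nat \<lceil>10000 * ln (real m)\<rceil>"

text \<open>Window of length w starting at 0-based index i (1-based index i+1).\<close>
definition window :: "nat \<Rightarrow> trace \<Rightarrow> nat \<Rightarrow> trace" where
  "window w x i = take w (drop i x)"

definition matches :: "nat \<Rightarrow> trace \<Rightarrow> trace \<Rightarrow> bool" where
  "matches w a b \<longleftrightarrow> real (card {k. k < w \<and> fst (a ! k) \<noteq> fst (b ! k)}) \<le> 5 * real w / 12"

text \<open>Algorithm 1 returns M_x for trace x with chosen (0-based) start i against trace set Y.\<close>
definition returns :: "nat \<Rightarrow> trace list \<Rightarrow> trace \<Rightarrow> nat \<Rightarrow> bool" where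
  "returns w Y x i \<longleftrightarrow>
     i + 3 * w \<le> length x \<and>
     (\<exists>y\<in>set Y. \<exists>j. j + 3 * w \<le> length y \<and>
        matches w (window w x i) (window w y j) \<and>
        matches w (window w x (i + 2 * w)) (window w y (j + 2 * w))) \<and>
     \<not> (\<exists>y\<in>set Y. \<exists>j j'. j + 2 * w < j' \<and> j' + w \<le> length y \<and>
        matches w (window w x i) (window w y j) \<and>
        matches w (window w x (i + 2 * w)) (window w y j'))"

definition deletion_free :: "nat \<Rightarrow> trace \<Rightarrow> bool" where
  "deletion_free w M \<longleftrightarrow> (\<forall>k<w. snd (M ! k) = snd (M ! 0) + k)"

definition all_chunks_deletion_free :: "nat \<Rightarrow> (trace \<times> nat) list \<Rightarrow> trace list \<Rightarrow> bool" where
  "all_chunks_deletion_free w XI Y \<longleftrightarrow>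
     (\<forall>(x, i) \<in> set XI. returns w Y x i \<longrightarrow> deletion_free w (window w x (i + w)))"

definition algo_experiment :: "real \<Rightarrow> nat \<Rightarrow> nat \<Rightarrow> (nat \<Rightarrow> real) \<Rightarrow> ((trace \<times> nat) list \<times> trace list) pmf" where
  "algo_experiment \<delta> n m p =
     bind_pmf (list_pmf (replicate (m ^ 2)
                 (pair_pmf (trace_pmf \<delta> n p) (pmf_of_set {0..n - 3 * win_len m})))) (\<lambda>XI.
     bind_pmf (list_pmf (replicate (m ^ 25) (trace_pmf \<delta> n p))) (\<lambda>Y.
     return_pmf (XI, Y)))"

definition S_measure :: "nat \<Rightarrow> (nat \<Rightarrow> real) measure" where
  "S_measure n = PiM {..<n} (\<lambda>_. uniform_measure lborel {0..1::real})"

end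

theory Submission
  imports Defs
begin

text \<open>Suppose a returned chunk \<open>M\<close> of a trace \<open>x\<close> contains a deletion, so that its bits span more
  than \<open>w\<close> original positions.  Condition (2) fails as soon as some \<open>y \<in> Y\<close> repeats the deletions
  of \<open>x\<close> on the blocks \<open>L M R\<close>, except that the whole span of \<open>M\<close> survives: the copies of \<open>L\<close>
  and \<open>R\<close> in \<open>y\<close> are then more than \<open>2 w\<close> apart, and they match unless the independent bits
  differ in more than \<open>5 w / 12\<close> places.  If \<open>x\<close> has at most \<open>K \<approx> 24 ln m / ln (1/\<delta>)\<close>
  deletions near the chunk and its bits are typical, a Chernoff bound shows that a fresh trace
  does this with probability at least \<open>\<delta>^K (1 - \<delta>)^(3 w + K) / 2 \<ge> m^-24.01 / 2\<close>, so one of the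
  \<open>m^25\<close> traces of \<open>Y\<close> succeeds except with probability \<open>exp (- m^0.99 / 2)\<close>.  A union bound
  over the \<open>m^2\<close> traces of \<open>X\<close>, together with Chernoff bounds for the atypical configurations
  (averaged over the uniform probabilities \<open>p\<close>), leaves a failure probability of at most \<open>3 / m\<close>.\<close>

lemma filter_upt_append:
  "lo \<le> v \<Longrightarrow> v \<le> hi \<Longrightarrow> filter Q [lo..<hi] = filter Q [lo..<v] @ filter Q [v..<hi]"
  using upt_add_eq_append[of lo v "hi - v"] by simp

lemma filter_upt_conv_Cons: "Q v \<Longrightarrow> v < hi \<Longrightarrow> filter Q [v..<hi] = v # filter Q [Suc v..<hi]"
  by (simp add: upt_conv_Cons)

lemma take_drop_filter_upt:
  assumes L: "L = filter Q [lo..<hi]" and k: "k < length L"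
  shows "take k L = filter Q [lo..<L!k] \<and> drop k L = filter Q [L!k..<hi]"
proof -
  define v where "v = L!k"
  have "v \<in> set L" using k by (simp add: v_def)
  then have v: "lo \<le> v" "v < hi" "Q v" using L by auto
  define A where "A = filter Q [lo..<v]"
  define B where "B = filter Q [v..<hi]"
  have LAB: "L = A @ B" using L v filter_upt_append[of lo v hi Q] by (simp add: A_def B_def)
  have B: "B = v # filter Q [Suc v..<hi]" using v by (simp add: B_def filter_upt_conv_Cons)
  have "L ! length A = v" using LAB B by (simp add: nth_append)
  moreover have "distinct L" using L by simp
  moreover have "length A < length L" using LAB B by simp
  ultimately have "k = length A" using k nth_eq_iff_index_eq[of L k "length A"] v_def by metis
  then have "take k L = A \<and> drop k L = B" using LAB by simp
  then show ?thesis unfolding A_def B_def v_def .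
qed

lemma take_Suc_filter_upt:
  assumes L: "L = filter Q [lo..<hi]" and k: "k < length L"
  shows "take (Suc k) L = filter Q [lo..<Suc (L!k)]"
proof -
  have "L!k \<in> set L" using k by simp
  then have v: "lo \<le> L!k" "Q (L!k)" using L by auto
  have "take (Suc k) L = take k L @ [L!k]" using k by (simp add: take_Suc_conv_app_nth)
  also have "\<dots> = filter Q [lo..<L!k] @ [L!k]" using take_drop_filter_upt[OF L k] by simp
  also have "\<dots> = filter Q [lo..<Suc (L!k)]" using v by simp
  finally show ?thesis .
qed

lemma drop_filter_upt:
  assumes "L = filter Q [lo..<hi]" "a < length L"
  shows "drop a L = filter Q [L!a..<hi]"
  using take_drop_filter_upt[OF assms] by blast

lemma take_drop_filter_upt_slice:
  assumes L: "L = filter Q [lo..<hi]" and a: "a + k < length L"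
  shows "take k (drop a L) = filter Q [L!a..<L!(a+k)]"
proof -
  have "drop a L = filter Q [L!a..<hi]" using drop_filter_upt[OF L] a by simp
  moreover have "k < length (drop a L)" "drop a L ! k = L!(a+k)" using a by simp_all
  ultimately show ?thesis using take_drop_filter_upt[of "drop a L" Q "L!a" hi k] by simp
qed

lemma take_Suc_drop_filter_upt_slice:
  assumes L: "L = filter Q [lo..<hi]" and a: "a + k < length L"
  shows "take (Suc k) (drop a L) = filter Q [L!a..<Suc (L!(a+k))]"
proof -
  have "drop a L = filter Q [L!a..<hi]" using drop_filter_upt[OF L] a by simp
  moreover have "k < length (drop a L)" "drop a L ! k = L!(a+k)" using a by simp_all
  ultimately show ?thesis using take_Suc_filter_upt[of "drop a L" Q "L!a" hi k] by simp
qed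

lemma sorted_wrt_less_nth_add:
  assumes "sorted_wrt (<) (L::nat list)" "i + k < length L"
  shows "L!i + k \<le> L!(i+k)"
  using assms
proof (induction k)
  case (Suc k)
  then have "L!i + k \<le> L!(i+k)" by simp
  moreover have "L!(i+k) < L!(i + Suc k)"
    using Suc.prems sorted_wrt_nth_less[of "(<)" L "i+k" "i + Suc k"] by simp
  ultimately show ?case by simp
qed simp

lemma card_filter_upt: "card {k. lo \<le> k \<and> k < hi \<and> Q k} = length (filter Q [lo..<hi])"
proof -
  have "set (filter Q [lo..<hi]) = {k. lo \<le> k \<and> k < hi \<and> Q k}" by auto
  then show ?thesis by (metis distinct_card distinct_filter distinct_upt)
qed

lemma card_filter_upt_add_card_not:
  "card {k. lo \<le> k \<and> k < hi \<and> Q k} + card {k. lo \<le> k \<and> k < hi \<and> \<not> Q k} = hi - lo"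
proof -
  have "{k. lo \<le> k \<and> k < hi \<and> Q k} \<union> {k. lo \<le> k \<and> k < hi \<and> \<not> Q k} = {lo..<hi}" by auto
  moreover have "{k. lo \<le> k \<and> k < hi \<and> Q k} \<inter> {k. lo \<le> k \<and> k < hi \<and> \<not> Q k} = {}" by auto
  ultimately show ?thesis
    by (metis (no_types, lifting) card_Un_disjoint card_atLeastLessThan finite_Un finite_atLeastLessThan)
qed

lemma window_map: "window w (map f L) i = map f (take w (drop i L))"
  by (simp add: window_def take_map drop_map)

lemma card_nth_distinct:
  assumes "distinct L" "length L = w"
  shows "card {q. q < w \<and> R (L!q)} = card {k \<in> set L. R k}"
proof -
  have "(\<lambda>q. L!q) ` {q. q < w \<and> R (L!q)} = {k \<in> set L. R k}"
    using assms by (auto simp: in_set_conv_nth image_iff)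
  moreover have "inj_on (\<lambda>q. L!q) {q. q < w \<and> R (L!q)}"
    using assms unfolding inj_on_def by (simp add: nth_eq_iff_index_eq)
  ultimately show ?thesis using card_image by fastforce
qed

lemma matches_map:
  assumes "distinct L" "length L = w"
  shows "matches w (map (\<lambda>k. (T k, k)) L) (map (\<lambda>k. (T' k, k)) L)
     \<longleftrightarrow> real (card {k \<in> set L. T k \<noteq> T' k}) \<le> 5 * real w / 12"
proof -
  have "{k. k < w \<and> fst (map (\<lambda>k. (T k, k)) L ! k) \<noteq> fst (map (\<lambda>k. (T' k, k)) L ! k)}
      = {q. q < w \<and> T (L!q) \<noteq> T' (L!q)}" using assms by auto
  then show ?thesis
    unfolding matches_def using card_nth_distinct[OF assms, of "\<lambda>k. T k \<noteq> T' k"] by simp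
qed

text \<open>\<open>y\<close> violates condition (2) of Algorithm 1 for the windows \<open>L\<close> and \<open>R\<close> of \<open>x\<close> at \<open>i\<close>.\<close>
definition distant_matches :: "nat \<Rightarrow> trace \<Rightarrow> nat \<Rightarrow> trace \<Rightarrow> bool" where
  "distant_matches w x i y \<longleftrightarrow> (\<exists>j j'. j + 2 * w < j' \<and> j' + w \<le> length y \<and>
     matches w (window w x i) (window w y j) \<and> matches w (window w x (i + 2 * w)) (window w y j'))"

section \<open>The three blocks around a chunk\<close>

text \<open>\<open>surv\<close> lists, in increasing order, the original positions of the bits that survive in a
  trace (those satisfying \<open>Q\<close>).\<close>
locale chunk_blocks =
  fixes Q :: "nat \<Rightarrow> bool" and n i w :: nat
  assumes fits: "i + 3 * w \<le> length (filter Q [0..<n])" and w_pos: "0 < w"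
begin

abbreviation surv :: "nat list" where "surv \<equiv> filter Q [0..<n]"
definition startL :: nat where "startL = surv ! i"
definition startM :: nat where "startM = surv ! (i + w)"
definition lastM :: nat where "lastM = surv ! (i + 2 * w - 1)"
definition startR :: nat where "startR = surv ! (i + 2 * w)"
definition lastR :: nat where "lastR = surv ! (i + 3 * w - 1)"

lemmas block_defs = startL_def startM_def lastM_def startR_def lastR_def

lemma surv_nth_less: "u < v \<Longrightarrow> v < length surv \<Longrightarrow> surv ! u < surv ! v"
  using sorted_wrt_nth_less[of "(<)" surv] by (simp add: sorted_wrt_filter)

lemma block_order:
  "startL \<le> startM" "startM \<le> lastM" "lastM < startR" "startR \<le> lastR" "lastR < n"
proof -
  show "startL \<le> startM"
    using surv_nth_less[of i "i + w"] fits w_pos by (simp add: block_defs)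
  show "startM \<le> lastM"
  proof (cases "w = 1")
    case False
    then have "i + w < i + 2 * w - 1" "i + 2 * w - 1 < length surv" using fits w_pos by auto
    then show ?thesis using surv_nth_less[of "i + w" "i + 2 * w - 1"] by (simp add: block_defs)
  next
    case True
    show ?thesis unfolding startM_def lastM_def using True by simp
  qed
  show "lastM < startR"
    using surv_nth_less[of "i + 2 * w - 1" "i + 2 * w"] fits w_pos by (simp add: block_defs)
  show "startR \<le> lastR"
  proof (cases "w = 1")
    case False
    then have "i + 2 * w < i + 3 * w - 1" "i + 3 * w - 1 < length surv" using fits w_pos by auto
    then show ?thesis using surv_nth_less[of "i + 2 * w" "i + 3 * w - 1"] by (simp add: block_defs)
  next
    case True
    show ?thesis unfolding startR_def lastR_def using True by simp
  qed
  have "i + 3 * w - 1 < length surv" using fits w_pos by simp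
  then have "lastR \<in> set surv" unfolding lastR_def by (rule nth_mem)
  then show "lastR < n" by simp
qed

lemma left_block: "take w (drop i surv) = filter Q [startL..<startM]"
  unfolding startL_def startM_def
  by (rule take_drop_filter_upt_slice[OF refl]) (use fits w_pos in linarith)

lemma right_block: "take w (drop (i + 2 * w) surv) = filter Q [startR..<Suc lastR]"
proof -
  have "Suc (w - 1) = w" "i + 2 * w + (w - 1) = i + 3 * w - 1" using w_pos by simp_all
  moreover have "i + 2 * w + (w - 1) < length surv" using fits w_pos by linarith
  ultimately show ?thesis unfolding startR_def lastR_def
    using take_Suc_drop_filter_upt_slice[OF refl, of "i + 2 * w" "w - 1" Q 0 n] by metis
qed

lemma all_blocks: "take (3 * w) (drop i surv) = filter Q [startL..<Suc lastR]"
proof -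
  have "Suc (3 * w - 1) = 3 * w" "i + (3 * w - 1) = i + 3 * w - 1" using w_pos by simp_all
  moreover have "i + (3 * w - 1) < length surv" using fits w_pos by linarith
  ultimately show ?thesis unfolding startL_def lastR_def
    using take_Suc_drop_filter_upt_slice[OF refl, of i "3 * w - 1" Q 0 n] by metis
qed

lemma length_blocks:
  "length (filter Q [startL..<startM]) = w"
  "length (filter Q [startR..<Suc lastR]) = w"
  "length (filter Q [startL..<Suc lastR]) = 3 * w"
  using arg_cong[OF left_block, of length] arg_cong[OF right_block, of length]
    arg_cong[OF all_blocks, of length] fits by simp_all

lemma no_survivor_between_M_and_R: "filter Q [Suc lastM..<startR] = []"
proof -
  have idx: "i + 2 * w - 1 < length surv" "Suc (i + 2 * w - 1) = i + 2 * w"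
    "i + 2 * w - 1 = i + (2 * w - 1)"
    using fits w_pos by auto
  have "drop (i + 2 * w - 1) surv = filter Q [lastM..<n]"
    unfolding lastM_def by (rule drop_filter_upt[OF refl idx(1)])
  moreover have "drop (i + 2 * w) surv = filter Q [startR..<n]"
    unfolding startR_def by (rule drop_filter_upt[OF refl]) (use fits w_pos in linarith)
  ultimately have "filter Q [lastM..<n] = lastM # filter Q [startR..<n]"
    using Cons_nth_drop_Suc[OF idx(1)] unfolding idx(2) lastM_def by simp
  moreover have "filter Q [lastM..<n] = lastM # filter Q [Suc lastM..<n]"
    using filter_upt_conv_Cons[of Q lastM n] nth_mem[OF idx(1)] block_order(5)
    by (simp add: lastM_def)
  ultimately have "filter Q [Suc lastM..<n] = filter Q [startR..<n]" by simp
  then show ?thesis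
    using filter_upt_append[of "Suc lastM" startR n Q] block_order(3,4,5) by simp
qed

lemma middle_span_long:
  assumes "\<not> deletion_free w (window w (map (\<lambda>k. (T k, k)) surv) (i + w))"
  shows "startM + w \<le> lastM"
proof (rule ccontr)
  assume short: "\<not> startM + w \<le> lastM"
  have "deletion_free w (window w (map (\<lambda>k. (T k, k)) surv) (i + w))"
    unfolding deletion_free_def window_map
  proof (intro allI impI)
    fix k assume k: "k < w"
    have "surv ! (i + w) + k \<le> surv ! (i + w + k)"
      using sorted_wrt_less_nth_add[of surv "i + w" k] k fits by (simp add: sorted_wrt_filter)
    moreover have "surv ! (i + w + k) + (w - 1 - k) \<le> surv ! (i + w + k + (w - 1 - k))"
      using sorted_wrt_less_nth_add[of surv "i + w + k" "w - 1 - k"] k fits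
      by (simp add: sorted_wrt_filter)
    moreover have "i + w + k + (w - 1 - k) = i + 2 * w - 1" using k by simp
    ultimately have "surv ! (i + w + k) = surv ! (i + w) + k"
      using short k by (simp add: startM_def lastM_def)
    then show "snd (map (\<lambda>k. (T k, k)) (take w (drop (i + w) surv)) ! k)
        = snd (map (\<lambda>k. (T k, k)) (take w (drop (i + w) surv)) ! 0) + k"
      using k fits by (simp add: add.assoc)
  qed
  then show False using assms by simp
qed

lemma survivors_of_pattern:
  assumes pattern: "\<And>k. startL \<le> k \<Longrightarrow> k \<le> lastR \<Longrightarrow> Q' k \<longleftrightarrow> Q k \<or> (startM \<le> k \<and> k \<le> lastM)"
  shows "filter Q' [startL..<n]
    = filter Q [startL..<startM] @ [startM..<Suc lastM] @ filter Q [startR..<Suc lastR] @ filter Q' [Suc lastR..<n]"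
proof -
  have same_left: "filter Q' [startL..<startM] = filter Q [startL..<startM]"
  proof (rule filter_cong[OF refl])
    fix k assume "k \<in> set [startL..<startM]"
    then show "Q' k = Q k" using pattern[of k] block_order by auto
  qed
  have all_middle: "filter Q' [startM..<Suc lastM] = [startM..<Suc lastM]"
  proof (rule filter_True, rule ballI)
    fix k assume "k \<in> set [startM..<Suc lastM]"
    then show "Q' k" using pattern[of k] block_order by auto
  qed
  have "filter Q' [Suc lastM..<Suc lastR] = filter Q [Suc lastM..<Suc lastR]"
  proof (rule filter_cong[OF refl])
    fix k assume "k \<in> set [Suc lastM..<Suc lastR]"
    then show "Q' k = Q k" using pattern[of k] block_order by auto
  qed
  also have "\<dots> = filter Q [Suc lastM..<startR] @ filter Q [startR..<Suc lastR]"
    using block_order filter_upt_append[of "Suc lastM" startR "Suc lastR" Q] by (simp del: upt_Suc)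
  finally have same_right: "filter Q' [Suc lastM..<Suc lastR] = filter Q [startR..<Suc lastR]"
    using no_survivor_between_M_and_R by (simp del: upt_Suc)
  show ?thesis
    using filter_upt_append[of startL startM n Q'] filter_upt_append[of startM "Suc lastM" n Q']
      filter_upt_append[of "Suc lastM" "Suc lastR" n Q'] block_order same_left all_middle same_right
    by (simp del: upt_Suc)
qed

text \<open>In the witness trace, \<open>L\<close> is followed by the whole span of \<open>M\<close> before \<open>R\<close> starts; when
  that span is longer than \<open>w\<close>, the windows matching \<open>L\<close> and \<open>R\<close> are more than \<open>2 w\<close> apart.\<close>
lemma distant_matches_of_pattern:
  assumes pattern: "\<And>k. startL \<le> k \<Longrightarrow> k \<le> lastR \<Longrightarrow> Q' k \<longleftrightarrow> Q k \<or> (startM \<le> k \<and> k \<le> lastM)"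
    and long: "startM + w \<le> lastM"
    and left: "real (card {k \<in> set (filter Q [startL..<startM]). T k \<noteq> T' k}) \<le> 5 * real w / 12"
    and right: "real (card {k \<in> set (filter Q [startR..<Suc lastR]). T k \<noteq> T' k}) \<le> 5 * real w / 12"
  shows "distant_matches w (map (\<lambda>k. (T k, k)) surv) i (map (\<lambda>k. (T' k, k)) (filter Q' [0..<n]))"
proof -
  let ?L = "filter Q [startL..<startM]" and ?R = "filter Q [startR..<Suc lastR]"
  let ?x = "map (\<lambda>k. (T k, k)) surv" and ?y = "map (\<lambda>k. (T' k, k)) (filter Q' [0..<n])"
  define j where "j = length (filter Q' [0..<startL])"
  define j' where "j' = j + w + (Suc lastM - startM)"
  have y_split: "filter Q' [0..<n] = filter Q' [0..<startL] @ filter Q' [startL..<n]"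
    using filter_upt_append[of 0 startL n Q'] block_order by simp
  then have y_from_j: "drop j (filter Q' [0..<n]) = ?L @ [startM..<Suc lastM] @ ?R @ filter Q' [Suc lastR..<n]"
    using survivors_of_pattern[OF pattern] by (simp add: j_def del: upt_Suc)
  have y_length: "length (filter Q' [0..<n]) = j + length (drop j (filter Q' [0..<n]))"
    using y_split by (simp add: j_def del: upt_Suc)
  have y_left: "window w ?y j = map (\<lambda>k. (T' k, k)) ?L"
    using y_from_j length_blocks by (simp add: window_map del: upt_Suc)
  have "drop j' (filter Q' [0..<n]) = drop (w + (Suc lastM - startM)) (drop j (filter Q' [0..<n]))"
    by (simp add: j'_def algebra_simps)
  also have "\<dots> = ?R @ filter Q' [Suc lastR..<n]"
    using y_from_j length_blocks block_order by (simp del: upt_Suc)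
  finally have y_right: "window w ?y j' = map (\<lambda>k. (T' k, k)) ?R"
    using length_blocks by (simp add: window_map del: upt_Suc)
  have x_left: "window w ?x i = map (\<lambda>k. (T k, k)) ?L"
    and x_right: "window w ?x (i + 2 * w) = map (\<lambda>k. (T k, k)) ?R"
    using left_block right_block by (simp_all add: window_map del: upt_Suc)
  show ?thesis unfolding distant_matches_def
  proof (rule exI[of _ j], rule exI[of _ j'], intro conjI)
    show "j + 2 * w < j'" "j' + w \<le> length ?y"
      using long y_length y_from_j length_blocks block_order by (simp_all add: j'_def del: upt_Suc)
    show "matches w (window w ?x i) (window w ?y j)"
      unfolding x_left y_left using matches_map[of ?L w T T'] left length_blocks by simp
    show "matches w (window w ?x (i + 2 * w)) (window w ?y j')"
      unfolding x_right y_right using matches_map[of ?R w T T'] right length_blocks by simp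
  qed
qed

lemma block_deletions_le:
  assumes sparse: "\<And>s. card {k. s \<le> k \<and> k < s + (3 * w + K + 1) \<and> k < n \<and> \<not> Q k} \<le> K"
  shows "card {k. startL \<le> k \<and> k < Suc lastR \<and> \<not> Q k} \<le> K"
    and "Suc lastR - startL \<le> 3 * w + K"
    and "startM \<le> startL + (w + K)"
    and "Suc lastR \<le> startR + (w + K)"
proof -
  have survivors: "card {k. startL \<le> k \<and> k < Suc lastR \<and> Q k} = 3 * w"
    using length_blocks(3) card_filter_upt[of startL "Suc lastR" Q] by simp
  show span: "Suc lastR - startL \<le> 3 * w + K"
  proof (rule ccontr)
    let ?N = "3 * w + K + 1"
    assume "\<not> Suc lastR - startL \<le> 3 * w + K"
    then have big: "startL + ?N \<le> Suc lastR" by simp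
    have "{k. startL \<le> k \<and> k < startL + ?N \<and> \<not> Q k} = {k. startL \<le> k \<and> k < startL + ?N \<and> k < n \<and> \<not> Q k}"
      using big block_order by auto
    then have few_deleted: "card {k. startL \<le> k \<and> k < startL + ?N \<and> \<not> Q k} \<le> K"
      using sparse by simp
    have "card {k. startL \<le> k \<and> k < startL + ?N \<and> Q k} \<le> card {k. startL \<le> k \<and> k < Suc lastR \<and> Q k}"
      by (rule card_mono) (use big in auto)
    then show False
      using survivors few_deleted card_filter_upt_add_card_not[of startL "startL + ?N" Q] by simp
  qed
  show deleted: "card {k. startL \<le> k \<and> k < Suc lastR \<and> \<not> Q k} \<le> K"
    using card_filter_upt_add_card_not[of startL "Suc lastR" Q] survivors span by simp
  have "card {k. startL \<le> k \<and> k < startM \<and> \<not> Q k} \<le> card {k. startL \<le> k \<and> k < Suc lastR \<and> \<not> Q k}"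
    by (rule card_mono) (use block_order in auto)
  then show "startM \<le> startL + (w + K)"
    using card_filter_upt_add_card_not[of startL startM Q] card_filter_upt[of startL startM Q]
      length_blocks(1) deleted by simp
  have "card {k. startR \<le> k \<and> k < Suc lastR \<and> \<not> Q k} \<le> card {k. startL \<le> k \<and> k < Suc lastR \<and> \<not> Q k}"
    by (rule card_mono) (use block_order in auto)
  then show "Suc lastR \<le> startR + (w + K)"
    using card_filter_upt_add_card_not[of startR "Suc lastR" Q] card_filter_upt[of startR "Suc lastR" Q]
      length_blocks(2) deleted by simp
qed

end

lemma nn_integral_list_pmf_prod:
  "(\<integral>\<^sup>+xs. (\<Prod>k<length qs. f k (xs!k)) \<partial>list_pmf qs) = (\<Prod>k<length qs. \<integral>\<^sup>+x. f k x \<partial>(qs!k))"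
proof (induction qs arbitrary: f)
  case Nil
  then show ?case by simp
next
  case (Cons q qs)
  have "(\<integral>\<^sup>+xs. (\<Prod>k<length (q#qs). f k (xs!k)) \<partial>list_pmf (q#qs))
     = (\<integral>\<^sup>+x. \<integral>\<^sup>+xs. f 0 x * (\<Prod>k<length qs. f (Suc k) (xs!k)) \<partial>list_pmf qs \<partial>q)"
    unfolding length_Cons prod.lessThan_Suc_shift by simp
  also have "\<dots> = (\<integral>\<^sup>+x. f 0 x * (\<Prod>k<length qs. \<integral>\<^sup>+x. f (Suc k) x \<partial>(qs!k)) \<partial>q)"
    using Cons.IH[of "\<lambda>k. f (Suc k)"] by (simp add: nn_integral_cmult)
  also have "\<dots> = (\<integral>\<^sup>+x. f 0 x \<partial>q) * (\<Prod>k<length qs. \<integral>\<^sup>+x. f (Suc k) x \<partial>(qs!k))"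
    by (simp add: nn_integral_multc)
  also have "\<dots> = (\<Prod>k<length (q#qs). \<integral>\<^sup>+x. f k x \<partial>((q#qs)!k))"
    unfolding length_Cons prod.lessThan_Suc_shift by simp
  finally show ?case .
qed

lemma length_in_set_list_pmf: "xs \<in> set_pmf (list_pmf qs) \<Longrightarrow> length xs = length qs"
  by (induction qs arbitrary: xs) auto

lemma finite_set_list_pmf: "(\<And>k. k < length qs \<Longrightarrow> finite (set_pmf (qs!k))) \<Longrightarrow> finite (set_pmf (list_pmf qs))"
proof (induction qs)
  case Nil then show ?case by simp
next
  case (Cons q qs)
  have fq: "finite (set_pmf q)" using Cons.prems[of 0] by simp
  have "finite (set_pmf (list_pmf qs))" using Cons.IH Cons.prems by fastforce
  then have "finite (\<Union>x\<in>set_pmf q. (\<lambda>xs. x # xs) ` set_pmf (list_pmf qs))" using fq by auto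
  moreover have "set_pmf (list_pmf (q#qs)) = (\<Union>x\<in>set_pmf q. (\<lambda>xs. x # xs) ` set_pmf (list_pmf qs))"
    by auto
  ultimately show ?case by simp
qed

lemma expectation_list_pmf_prod:
  fixes f :: "nat \<Rightarrow> 'a \<Rightarrow> real"
  assumes fin: "\<And>k. k < length qs \<Longrightarrow> finite (set_pmf (qs!k))" and nn: "\<And>k x. 0 \<le> f k x"
  shows "measure_pmf.expectation (list_pmf qs) (\<lambda>xs. \<Prod>k<length qs. f k (xs!k))
       = (\<Prod>k<length qs. measure_pmf.expectation (qs!k) (f k))"
proof -
  have fin2: "finite (set_pmf (list_pmf qs))" using finite_set_list_pmf fin by blast
  have "ennreal (measure_pmf.expectation (list_pmf qs) (\<lambda>xs. \<Prod>k<length qs. f k (xs!k)))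
      = (\<integral>\<^sup>+xs. ennreal (\<Prod>k<length qs. f k (xs!k)) \<partial>list_pmf qs)"
    by (rule nn_integral_eq_integral[symmetric]) (auto intro!: integrable_measure_pmf_finite fin2 prod_nonneg nn)
  also have "\<dots> = (\<integral>\<^sup>+xs. (\<Prod>k<length qs. ennreal (f k (xs!k))) \<partial>list_pmf qs)"
    by (simp add: prod_ennreal nn)
  also have "\<dots> = (\<Prod>k<length qs. \<integral>\<^sup>+x. ennreal (f k x) \<partial>(qs!k))"
    by (rule nn_integral_list_pmf_prod)
  also have "\<dots> = (\<Prod>k<length qs. ennreal (measure_pmf.expectation (qs!k) (f k)))"
    by (intro prod.cong refl nn_integral_eq_integral) (auto intro!: integrable_measure_pmf_finite fin nn)
  also have "\<dots> = ennreal (\<Prod>k<length qs. measure_pmf.expectation (qs!k) (f k))"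
    by (rule prod_ennreal) (auto intro!: integral_nonneg_AE nn)
  finally show ?thesis
    by (subst (asm) ennreal_inj) (auto intro!: integral_nonneg_AE prod_nonneg nn)
qed

lemma prod_indicator_eq_if:
  fixes N :: nat
  shows "(\<Prod>k<N. (indicator (A k) (x k) :: 'b::comm_semiring_1)) = (if \<forall>k<N. x k \<in> A k then 1 else 0)"
  by (induction N) (auto simp: less_Suc_eq)

lemma prob_list_pmf_replicate_all:
  "measure_pmf.prob (list_pmf (replicate M q)) {Y. \<forall>y\<in>set Y. R y} = (measure_pmf.prob q {y. R y}) ^ M"
proof -
  have "emeasure (list_pmf (replicate M q)) {Y. \<forall>y\<in>set Y. R y}
      = (\<integral>\<^sup>+Y. indicator {Y. \<forall>y\<in>set Y. R y} Y \<partial>list_pmf (replicate M q))"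
    by simp
  also have "\<dots> = (\<integral>\<^sup>+Y. (\<Prod>k<length (replicate M q). indicator {y. R y} (Y!k)) \<partial>list_pmf (replicate M q))"
  proof (rule nn_integral_cong_AE)
    show "AE Y in measure_pmf (list_pmf (replicate M q)). indicator {Y. \<forall>y\<in>set Y. R y} Y
        = (\<Prod>k<length (replicate M q). indicator {y. R y} (Y!k) :: ennreal)"
      unfolding AE_measure_pmf_iff
    proof
      fix Y assume "Y \<in> set_pmf (list_pmf (replicate M q))"
      then have l: "length Y = M" using length_in_set_list_pmf by fastforce
      show "indicator {Y. \<forall>y\<in>set Y. R y} Y = (\<Prod>k<length (replicate M q). indicator {y. R y} (Y!k) :: ennreal)"
        using l by (subst prod_indicator_eq_if) (auto simp: all_set_conv_all_nth indicator_def)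
    qed
  qed
  also have "\<dots> = (\<Prod>k<length (replicate M q). \<integral>\<^sup>+y. indicator {y. R y} y \<partial>(replicate M q ! k))"
    by (rule nn_integral_list_pmf_prod)
  also have "\<dots> = (emeasure q {y. R y}) ^ M" by simp
  finally have "ennreal (measure_pmf.prob (list_pmf (replicate M q)) {Y. \<forall>y\<in>set Y. R y})
      = ennreal ((measure_pmf.prob q {y. R y}) ^ M)"
    by (simp add: measure_pmf.emeasure_eq_measure ennreal_power)
  then show ?thesis by (simp add: ennreal_inj)
qed

lemma nn_integral_list_pmf_replicate_nth:
  assumes "k < M"
  shows "(\<integral>\<^sup>+XI. f (XI!k) \<partial>list_pmf (replicate M q)) = (\<integral>\<^sup>+x. f x \<partial>q)"
proof -
  have e: "\<And>XI. (\<Prod>j<M. (if j = k then f else (\<lambda>_. 1)) (XI!j)) = f (XI!k)"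
  proof -
    fix XI
    have "(\<Prod>j<M. (if j = k then f else (\<lambda>_. 1)) (XI!j)) = (\<Prod>j<M. if j = k then f (XI!j) else 1)"
      by (rule prod.cong) auto
    then show "(\<Prod>j<M. (if j = k then f else (\<lambda>_. 1)) (XI!j)) = f (XI!k)" using assms by simp
  qed
  have "(\<integral>\<^sup>+XI. f (XI!k) \<partial>list_pmf (replicate M q))
     = (\<integral>\<^sup>+XI. (\<Prod>j<length (replicate M q). (if j = k then f else (\<lambda>_. 1)) (XI!j)) \<partial>list_pmf (replicate M q))"
    using e by simp
  also have "\<dots> = (\<Prod>j<length (replicate M q). \<integral>\<^sup>+x. (if j = k then f else (\<lambda>_. 1)) x \<partial>(replicate M q ! j))"
    by (rule nn_integral_list_pmf_prod)
  also have "\<dots> = (\<integral>\<^sup>+x. f x \<partial>q)"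
  proof -
    have "(\<Prod>j<M. \<integral>\<^sup>+x. (if j = k then f else (\<lambda>_. 1)) x \<partial>q) = (\<Prod>j<M. if j = k then (\<integral>\<^sup>+x. f x \<partial>q) else 1)"
      by (rule prod.cong) auto
    then show ?thesis using assms by simp
  qed
  finally show ?thesis .
qed

lemma list_pmf_map_map_pmf:
  "list_pmf (map (\<lambda>k. map_pmf (h k) (g k)) ks) = map_pmf (\<lambda>cs. map (\<lambda>(k,c). h k c) (zip ks cs)) (list_pmf (map g ks))"
proof (induction ks)
  case Nil then show ?case by simp
next
  case (Cons k ks)
  show ?case
    by (simp add: Cons.IH bind_map_pmf map_bind_pmf)
qed

section \<open>Configurations: the randomness behind a trace\<close>

text \<open>A configuration records, for every position \<open>k\<close> of \<open>S\<close>, the bit \<open>t\<^sub>k\<close> and whether it is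
  deleted.\<close>
definition pos_config_pmf :: "real \<Rightarrow> (nat \<Rightarrow> real) \<Rightarrow> nat \<Rightarrow> (bool \<times> bool) pmf" where
  "pos_config_pmf \<delta> p k = pair_pmf (bernoulli_pmf (p k)) (bernoulli_pmf \<delta>)"

definition config_pmf :: "real \<Rightarrow> nat \<Rightarrow> (nat \<Rightarrow> real) \<Rightarrow> (bool \<times> bool) list pmf" where
  "config_pmf \<delta> n p = list_pmf (map (pos_config_pmf \<delta> p) [0..<n])"

definition config_trace :: "(bool \<times> bool) list \<Rightarrow> trace" where
  "config_trace cs = map (\<lambda>k. (fst (cs!k), k)) (filter (\<lambda>k. \<not> snd (cs!k)) [0..<length cs])"

lemma pos_pmf_eq_map_pos_config: "pos_pmf \<delta> p k = map_pmf (\<lambda>(t,d). if d then [] else [(t,k)]) (pos_config_pmf \<delta> p k)"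
  by (simp add: pos_pmf_def pos_config_pmf_def pair_pmf_def map_bind_pmf)

lemma concat_map_if_singleton:
  "concat (map (\<lambda>k. if Q k then [f k] else []) xs) = map f (filter Q xs)"
  by (induction xs) auto

lemma concat_pos_traces:
  assumes "length cs = n"
  shows "concat (map (\<lambda>(k,c). (\<lambda>(t,d). if d then [] else [(t,k)]) c) (zip [0..<n] cs)) = config_trace cs"
proof -
  have z: "zip [0..<n] cs = map (\<lambda>k. (k, cs!k)) [0..<n]"
    using assms by (simp add: list_eq_iff_nth_eq)
  have "map (\<lambda>(k,c). (\<lambda>(t,d). if d then [] else [(t,k)]) c) (zip [0..<n] cs)
      = map (\<lambda>k. if \<not> snd (cs!k) then [(fst (cs!k), k)] else []) [0..<n]"
    unfolding z by (auto simp: split_beta)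
  then show ?thesis using assms by (simp add: concat_map_if_singleton config_trace_def)
qed

lemma trace_pmf_eq_map_config: "trace_pmf \<delta> n p = map_pmf config_trace (config_pmf \<delta> n p)"
proof -
  have "trace_pmf \<delta> n p = map_pmf concat (list_pmf (map (\<lambda>k. map_pmf (\<lambda>(t,d). if d then [] else [(t,k)]) (pos_config_pmf \<delta> p k)) [0..<n]))"
  proof -
    have "pos_pmf \<delta> p = (\<lambda>k. map_pmf (\<lambda>(t,d). if d then [] else [(t,k)]) (pos_config_pmf \<delta> p k))"
      by (rule ext) (rule pos_pmf_eq_map_pos_config)
    then show ?thesis by (simp add: trace_pmf_def)
  qed
  also have "\<dots> = map_pmf (\<lambda>cs. concat (map (\<lambda>(k,c). (\<lambda>(t,d). if d then [] else [(t,k)]) c) (zip [0..<n] cs))) (config_pmf \<delta> n p)"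
    by (simp add: list_pmf_map_map_pmf[where h="\<lambda>k. (\<lambda>(t,d). if d then [] else [(t,k)])"] map_pmf_comp config_pmf_def)
  also have "\<dots> = map_pmf config_trace (config_pmf \<delta> n p)"
  proof (rule map_pmf_cong[OF refl])
    fix cs assume "cs \<in> set_pmf (config_pmf \<delta> n p)"
    then have "length cs = n" using length_in_set_list_pmf unfolding config_pmf_def by fastforce
    then show "concat (map (\<lambda>(k,c). (\<lambda>(t,d). if d then [] else [(t,k)]) c) (zip [0..<n] cs)) = config_trace cs"
      by (rule concat_pos_traces)
  qed
  finally show ?thesis .
qed

lemma length_in_set_config_pmf: "cs \<in> set_pmf (config_pmf \<delta> n p) \<Longrightarrow> length cs = n"
  using length_in_set_list_pmf unfolding config_pmf_def by fastforce

definition expect_bernoulli_pair :: "real \<Rightarrow> real \<Rightarrow> (bool \<times> bool \<Rightarrow> real) \<Rightarrow> real" where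
  "expect_bernoulli_pair a b F = a*b*F(True,True) + a*(1-b)*F(True,False) + (1-a)*b*F(False,True) + (1-a)*(1-b)*F(False,False)"

lemma finite_set_pos_config_pmf: "finite (set_pmf (pos_config_pmf \<delta> p k))"
  by (rule finite_subset[of _ UNIV]) auto

lemma expectation_pos_config_pmf:
  assumes "0 \<le> p k" "p k \<le> 1" "0 \<le> \<delta>" "\<delta> \<le> 1"
  shows "measure_pmf.expectation (pos_config_pmf \<delta> p k) F = expect_bernoulli_pair (p k) \<delta> F"
proof -
  have "measure_pmf.expectation (pos_config_pmf \<delta> p k) F = (\<Sum>z\<in>UNIV. pmf (pos_config_pmf \<delta> p k) z *\<^sub>R F z)"
    by (rule integral_measure_pmf) auto
  also have "\<dots> = expect_bernoulli_pair (p k) \<delta> F"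
  proof -
    have U: "(UNIV::(bool\<times>bool) set) = {(True,True),(True,False),(False,True),(False,False)}"
    proof (rule set_eqI)
      fix z :: "bool \<times> bool" show "z \<in> UNIV \<longleftrightarrow> z \<in> {(True,True),(True,False),(False,True),(False,False)}"
        by (cases z) auto
    qed
    show ?thesis using assms by (simp add: U pos_config_pmf_def pmf_pair expect_bernoulli_pair_def algebra_simps)
  qed
  finally show ?thesis .
qed

lemma expectation_config_pmf_prod:
  assumes p01: "\<And>k. k < n \<Longrightarrow> 0 \<le> p k \<and> p k \<le> 1" and d01: "0 \<le> \<delta>" "\<delta> \<le> 1"
  and nn: "\<And>k z. 0 \<le> g k z"
  shows "measure_pmf.expectation (config_pmf \<delta> n p) (\<lambda>c. \<Prod>k<n. g k (c!k)) = (\<Prod>k<n. expect_bernoulli_pair (p k) \<delta> (g k))"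
proof -
  have "measure_pmf.expectation (config_pmf \<delta> n p) (\<lambda>c. \<Prod>k<length (map (pos_config_pmf \<delta> p) [0..<n]). g k (c!k))
      = (\<Prod>k<length (map (pos_config_pmf \<delta> p) [0..<n]). measure_pmf.expectation (map (pos_config_pmf \<delta> p) [0..<n] ! k) (g k))"
    unfolding config_pmf_def by (rule expectation_list_pmf_prod) (auto simp: finite_set_pos_config_pmf nn)
  then show ?thesis using p01 d01 by (simp add: expectation_pos_config_pmf)
qed

lemma prob_config_pmf_eq_prod:
  assumes p01: "\<And>k. k < n \<Longrightarrow> 0 \<le> p k \<and> p k \<le> 1" and d01: "0 \<le> \<delta>" "\<delta> \<le> 1"
  and nn: "\<And>k z. 0 \<le> g k z"
  and eq: "\<And>c. c \<in> set_pmf (config_pmf \<delta> n p) \<Longrightarrow> indicator A c = (\<Prod>k<n. g k (c!k))"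
  shows "measure_pmf.prob (config_pmf \<delta> n p) A = (\<Prod>k<n. expect_bernoulli_pair (p k) \<delta> (g k))"
proof -
  have "measure_pmf.prob (config_pmf \<delta> n p) A = measure_pmf.expectation (config_pmf \<delta> n p) (indicator A)"
    by simp
  also have "\<dots> = measure_pmf.expectation (config_pmf \<delta> n p) (\<lambda>c. \<Prod>k<n. g k (c!k))"
    by (rule integral_cong_AE) (auto simp: AE_measure_pmf_iff eq)
  also have "\<dots> = (\<Prod>k<n. expect_bernoulli_pair (p k) \<delta> (g k))" by (rule expectation_config_pmf_prod[OF p01 d01 nn])
  finally show ?thesis .
qed

lemma markov_config_pmf_prod:
  assumes p01: "\<And>k. k < n \<Longrightarrow> 0 \<le> p k \<and> p k \<le> 1" and d01: "0 \<le> \<delta>" "\<delta> \<le> 1"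
  and nn: "\<And>k z. 0 \<le> g k z" and L: "0 \<le> L"
  and dom: "\<And>c. c \<in> set_pmf (config_pmf \<delta> n p) \<Longrightarrow> c \<in> A \<Longrightarrow> L \<le> (\<Prod>k<n. g k (c!k))"
  shows "L * measure_pmf.prob (config_pmf \<delta> n p) A \<le> (\<Prod>k<n. expect_bernoulli_pair (p k) \<delta> (g k))"
proof -
  have fin: "finite (set_pmf (config_pmf \<delta> n p))" unfolding config_pmf_def
    by (rule finite_set_list_pmf) (auto simp: finite_set_pos_config_pmf)
  have "L * measure_pmf.prob (config_pmf \<delta> n p) A = measure_pmf.expectation (config_pmf \<delta> n p) (\<lambda>c. L * indicator A c)"
    by simp
  also have "\<dots> \<le> measure_pmf.expectation (config_pmf \<delta> n p) (\<lambda>c. \<Prod>k<n. g k (c!k))"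
  proof (rule integral_mono_AE)
    show "integrable (measure_pmf (config_pmf \<delta> n p)) (\<lambda>c. L * indicator A c :: real)"
      by (rule integrable_measure_pmf_finite[OF fin])
    show "integrable (measure_pmf (config_pmf \<delta> n p)) (\<lambda>c. \<Prod>k<n. g k (c!k))"
      by (rule integrable_measure_pmf_finite[OF fin])
    show "AE c in measure_pmf (config_pmf \<delta> n p). L * indicator A c \<le> (\<Prod>k<n. g k (c!k))"
      unfolding AE_measure_pmf_iff using dom by (auto simp: indicator_def intro!: prod_nonneg nn)
  qed
  also have "\<dots> = (\<Prod>k<n. expect_bernoulli_pair (p k) \<delta> (g k))" by (rule expectation_config_pmf_prod[OF p01 d01 nn])
  finally show ?thesis .
qed

section \<open>Reduction to a single chunk\<close>

definition bad_return :: "nat \<Rightarrow> trace \<times> nat \<Rightarrow> trace list \<Rightarrow> bool" where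
  "bad_return w z Y \<longleftrightarrow> returns w Y (fst z) (snd z) \<and> \<not> deletion_free w (window w (fst z) (snd z + w))"

lemma bad_returnD:
  assumes "bad_return w (x, i) Y"
  shows "i + 3 * w \<le> length x" "\<not> deletion_free w (window w x (i + w))"
    "\<forall>y\<in>set Y. \<not> distant_matches w x i y"
  using assms unfolding bad_return_def returns_def distant_matches_def by auto

lemma prob_not_all_chunks_deletion_free_le:
  "measure_pmf.prob (bind_pmf (list_pmf (replicate N X)) (\<lambda>XI. bind_pmf Ys (\<lambda>Y. return_pmf (XI, Y))))
      {(XI, Y). \<not> all_chunks_deletion_free w XI Y}
   \<le> real N * measure_pmf.prob (pair_pmf X Ys) {(z, Y). bad_return w z Y}"
proof -
  define XIs where "XIs = list_pmf (replicate N X)"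
  define h where "h = (\<lambda>z. emeasure Ys {Y. bad_return w z Y})"
  have union: "indicator {(XI, Y). \<not> all_chunks_deletion_free w XI Y} (XI, Y)
      \<le> (\<Sum>k<N. indicator {Y. bad_return w (XI!k) Y} Y :: ennreal)"
    if "XI \<in> set_pmf XIs" for XI Y
  proof (cases "all_chunks_deletion_free w XI Y")
    case False
    then have "\<exists>z\<in>set XI. bad_return w z Y"
      unfolding all_chunks_deletion_free_def case_prod_beta bad_return_def by blast
    then obtain z where "z \<in> set XI" "bad_return w z Y" by blast
    moreover have "length XI = N" using that length_in_set_list_pmf unfolding XIs_def by fastforce
    ultimately obtain k where "k < N" "bad_return w (XI!k) Y" by (metis in_set_conv_nth)
    then have "(1::ennreal) \<le> (\<Sum>k<N. indicator {Y. bad_return w (XI!k) Y} Y)"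
      using member_le_sum[of k "{..<N}" "\<lambda>k. indicator {Y. bad_return w (XI!k) Y} Y :: ennreal"] by simp
    then show ?thesis using False by simp
  qed simp
  have "emeasure (bind_pmf XIs (\<lambda>XI. bind_pmf Ys (\<lambda>Y. return_pmf (XI, Y))))
          {(XI, Y). \<not> all_chunks_deletion_free w XI Y}
      = (\<integral>\<^sup>+XI. \<integral>\<^sup>+Y. indicator {(XI, Y). \<not> all_chunks_deletion_free w XI Y} (XI, Y) \<partial>Ys \<partial>XIs)"
    by simp
  also have "\<dots> \<le> (\<integral>\<^sup>+XI. \<integral>\<^sup>+Y. (\<Sum>k<N. indicator {Y. bad_return w (XI!k) Y} Y) \<partial>Ys \<partial>XIs)"
    using union by (intro nn_integral_mono_AE) (auto simp: AE_measure_pmf_iff intro!: nn_integral_mono)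
  also have "\<dots> = (\<Sum>k<N. \<integral>\<^sup>+XI. h (XI!k) \<partial>XIs)"
    by (simp add: nn_integral_sum h_def)
  also have "\<dots> = of_nat N * (\<integral>\<^sup>+z. h z \<partial>X)"
    unfolding XIs_def by (simp add: nn_integral_list_pmf_replicate_nth)
  also have "(\<integral>\<^sup>+z. h z \<partial>X) = emeasure (pair_pmf X Ys) {(z, Y). bad_return w z Y}"
    by (simp add: h_def nn_integral_pair_pmf' indicator_def case_prod_beta flip: nn_integral_indicator)
  also have "of_nat N * emeasure (pair_pmf X Ys) {(z, Y). bad_return w z Y}
      = ennreal (real N * measure_pmf.prob (pair_pmf X Ys) {(z, Y). bad_return w z Y})"
    by (simp add: measure_pmf.emeasure_eq_measure ennreal_of_nat_eq_real_of_nat ennreal_mult)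
  finally show ?thesis
    unfolding XIs_def measure_pmf.emeasure_eq_measure by (subst (asm) ennreal_le_iff) auto
qed

lemma emeasure_bad_return_le:
  assumes witness: "i + 3 * w \<le> length x \<Longrightarrow> \<not> deletion_free w (window w x (i + w)) \<Longrightarrow>
    G \<le> measure_pmf.prob q {y. distant_matches w x i y}"
  shows "emeasure (list_pmf (replicate N q)) {Y. bad_return w (x, i) Y} \<le> ennreal ((1 - G) ^ N)"
proof (cases "i + 3 * w \<le> length x \<and> \<not> deletion_free w (window w x (i + w))")
  case True
  have "measure_pmf.prob q {y. \<not> distant_matches w x i y} = 1 - measure_pmf.prob q {y. distant_matches w x i y}"
    using measure_pmf.prob_compl[of "{y. distant_matches w x i y}" q]
    by (simp add: Compl_eq_Diff_UNIV[symmetric] Collect_neg_eq)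
  also have "\<dots> \<le> 1 - G" using witness True by simp
  finally have miss: "measure_pmf.prob q {y. \<not> distant_matches w x i y} \<le> 1 - G" .
  have "emeasure (list_pmf (replicate N q)) {Y. bad_return w (x, i) Y}
      \<le> emeasure (list_pmf (replicate N q)) {Y. \<forall>y\<in>set Y. \<not> distant_matches w x i y}"
    using bad_returnD by (intro emeasure_mono) auto
  also have "\<dots> = ennreal (measure_pmf.prob q {y. \<not> distant_matches w x i y} ^ N)"
    by (simp add: measure_pmf.emeasure_eq_measure prob_list_pmf_replicate_all)
  also have "\<dots> \<le> ennreal ((1 - G) ^ N)"
    using miss by (intro ennreal_leI power_mono) auto
  finally show ?thesis .
next
  case False
  then have "{Y. bad_return w (x, i) Y} = {}" using bad_returnD by blast
  then show ?thesis by simp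
qed

lemma prob_bad_return_le:
  assumes G: "G \<le> 1"
    and witness: "\<And>cs i. cs \<in> set_pmf (config_pmf \<delta> n p) \<Longrightarrow> good_config cs \<Longrightarrow>
      i + 3 * w \<le> length (config_trace cs) \<Longrightarrow> \<not> deletion_free w (window w (config_trace cs) (i + w)) \<Longrightarrow>
      G \<le> measure_pmf.prob (trace_pmf \<delta> n p) {y. distant_matches w (config_trace cs) i y}"
  shows "measure_pmf.prob (pair_pmf (pair_pmf (trace_pmf \<delta> n p) U) (list_pmf (replicate N (trace_pmf \<delta> n p))))
      {(z, Y). bad_return w z Y}
    \<le> (1 - G) ^ N + measure_pmf.prob (config_pmf \<delta> n p) {cs. \<not> good_config cs}"
proof -
  define C where "C = config_pmf \<delta> n p"
  define Ys where "Ys = list_pmf (replicate N (trace_pmf \<delta> n p))"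
  have G0: "0 \<le> (1 - G) ^ N" using G by simp
  have one_chunk: "emeasure Ys {Y. bad_return w (config_trace cs, i) Y}
      \<le> ennreal ((1 - G) ^ N) + indicator {cs. \<not> good_config cs} cs"
    if cs: "cs \<in> set_pmf C" for cs i
  proof (cases "good_config cs")
    case True
    have "emeasure Ys {Y. bad_return w (config_trace cs, i) Y} \<le> ennreal ((1 - G) ^ N)"
      unfolding Ys_def using witness cs True by (intro emeasure_bad_return_le) (simp add: C_def)
    then show ?thesis by (simp add: add_increasing2)
  next
    case False
    have "emeasure Ys {Y. bad_return w (config_trace cs, i) Y} \<le> 1"
      by (rule measure_pmf.emeasure_le_1)
    then show ?thesis using False by (simp add: add_increasing)
  qed
  have "emeasure (pair_pmf (pair_pmf (trace_pmf \<delta> n p) U) Ys) {(z, Y). bad_return w z Y}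
      = (\<integral>\<^sup>+cs. \<integral>\<^sup>+i. emeasure Ys {Y. bad_return w (config_trace cs, i) Y} \<partial>U \<partial>C)"
    by (simp add: nn_integral_pair_pmf' trace_pmf_eq_map_config C_def indicator_def case_prod_beta
        flip: nn_integral_indicator)
  also have "\<dots> \<le> (\<integral>\<^sup>+cs. ennreal ((1 - G) ^ N) + indicator {cs. \<not> good_config cs} cs \<partial>C)"
  proof (rule nn_integral_mono_AE, unfold AE_measure_pmf_iff, intro ballI)
    fix cs assume "cs \<in> set_pmf C"
    then have "(\<integral>\<^sup>+i. emeasure Ys {Y. bad_return w (config_trace cs, i) Y} \<partial>U)
        \<le> (\<integral>\<^sup>+i. ennreal ((1 - G) ^ N) + indicator {cs. \<not> good_config cs} cs \<partial>U)"
      using one_chunk by (intro nn_integral_mono) auto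
    then show "(\<integral>\<^sup>+i. emeasure Ys {Y. bad_return w (config_trace cs, i) Y} \<partial>U)
        \<le> ennreal ((1 - G) ^ N) + indicator {cs. \<not> good_config cs} cs"
      by simp
  qed
  also have "\<dots> = ennreal ((1 - G) ^ N + measure_pmf.prob C {cs. \<not> good_config cs})"
    using G0 by (simp add: nn_integral_add measure_pmf.emeasure_eq_measure ennreal_plus)
  finally show ?thesis
    unfolding C_def Ys_def measure_pmf.emeasure_eq_measure using G0
    by (subst (asm) ennreal_le_iff) auto
qed

definition deletions_on :: "nat \<Rightarrow> nat \<Rightarrow> nat \<Rightarrow> (nat \<Rightarrow> bool) \<Rightarrow> (bool \<times> bool) list \<Rightarrow> bool" where
  "deletions_on n a b D c \<longleftrightarrow> length c = n \<and> (\<forall>k<n. a \<le> k \<and> k \<le> b \<longrightarrow> snd (c!k) = D k)"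

definition pattern_factor :: "real \<Rightarrow> nat \<Rightarrow> nat \<Rightarrow> (nat \<Rightarrow> bool) \<Rightarrow> nat \<Rightarrow> real" where
  "pattern_factor \<delta> a b D k = (if a \<le> k \<and> k \<le> b then (if D k then \<delta> else 1 - \<delta>) else 1)"

lemma prod_if_01:
  fixes n :: nat
  shows "(\<Prod>k<n. if P k then (if Q k then 1 else 0) else (1::real)) = (if \<forall>k<n. P k \<longrightarrow> Q k then 1 else 0)"
  by (induction n) (auto simp: less_Suc_eq)

lemma prob_deletions_on:
  assumes p01: "\<And>k. k < n \<Longrightarrow> 0 \<le> p k \<and> p k \<le> 1" and d01: "0 \<le> \<delta>" "\<delta> \<le> 1"
  shows "measure_pmf.prob (config_pmf \<delta> n p) {c. deletions_on n a b D c} = (\<Prod>k<n. pattern_factor \<delta> a b D k)"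
proof -
  define g where "g = (\<lambda>k (z::bool \<times> bool). if a \<le> k \<and> k \<le> b then (if snd z = D k then 1 else 0) else (1::real))"
  have "measure_pmf.prob (config_pmf \<delta> n p) {c. deletions_on n a b D c}
      = (\<Prod>k<n. expect_bernoulli_pair (p k) \<delta> (g k))"
  proof (rule prob_config_pmf_eq_prod[OF p01 d01])
    show "\<And>k z. 0 \<le> g k z" by (simp add: g_def)
    fix c assume "c \<in> set_pmf (config_pmf \<delta> n p)"
    then have "length c = n" by (rule length_in_set_config_pmf)
    then show "indicator {c. deletions_on n a b D c} c = (\<Prod>k<n. g k (c!k))"
      unfolding g_def prod_if_01 by (simp add: indicator_def deletions_on_def)
  qed
  also have "\<dots> = (\<Prod>k<n. pattern_factor \<delta> a b D k)"
    by (intro prod.cong refl) (auto simp: g_def pattern_factor_def expect_bernoulli_pair_def algebra_simps)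
  finally show ?thesis .
qed

lemma prod_pattern_factor_ge:
  assumes d01: "0 \<le> \<delta>" "\<delta> \<le> 1"
    and deleted: "card {k. k < n \<and> a \<le> k \<and> k \<le> b \<and> D k} \<le> K"
    and kept: "card {k. k < n \<and> a \<le> k \<and> k \<le> b \<and> \<not> D k} \<le> M"
  shows "\<delta> ^ K * (1 - \<delta>) ^ M \<le> (\<Prod>k<n. pattern_factor \<delta> a b D k)"
proof -
  have "(\<Prod>k<n. pattern_factor \<delta> a b D k) = (\<Prod>k\<in>{..<n} \<inter> {k. a \<le> k \<and> k \<le> b}. if D k then \<delta> else 1 - \<delta>)"
    unfolding pattern_factor_def by (simp add: prod.If_cases)
  also have "\<dots> = \<delta> ^ card ({..<n} \<inter> {k. a \<le> k \<and> k \<le> b} \<inter> {k. D k})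
      * (1 - \<delta>) ^ card ({..<n} \<inter> {k. a \<le> k \<and> k \<le> b} \<inter> - {k. D k})"
    by (simp add: prod.If_cases)
  also have "{..<n} \<inter> {k. a \<le> k \<and> k \<le> b} \<inter> {k. D k} = {k. k < n \<and> a \<le> k \<and> k \<le> b \<and> D k}" by auto
  also have "{..<n} \<inter> {k. a \<le> k \<and> k \<le> b} \<inter> - {k. D k} = {k. k < n \<and> a \<le> k \<and> k \<le> b \<and> \<not> D k}" by auto
  finally have split: "(\<Prod>k<n. pattern_factor \<delta> a b D k)
      = \<delta> ^ card {k. k < n \<and> a \<le> k \<and> k \<le> b \<and> D k} * (1 - \<delta>) ^ card {k. k < n \<and> a \<le> k \<and> k \<le> b \<and> \<not> D k}" .
  show ?thesis unfolding split
    by (intro mult_mono power_decreasing deleted kept) (use d01 in auto)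
qed

section \<open>Chernoff bound for mismatches\<close>

definition mismatch_prob :: "real \<Rightarrow> bool \<Rightarrow> real" where
  "mismatch_prob q t = (if t then 1 - q else q)"

lemma exp_moment_deletions_on_mismatches:
  assumes p01: "\<And>k. k < n \<Longrightarrow> 0 \<le> p k \<and> p k \<le> 1" and d01: "0 \<le> \<delta>" "\<delta> \<le> 1" and u: "0 \<le> u"
    and S: "S \<subseteq> {k. a \<le> k \<and> k \<le> b \<and> k < n}" "\<forall>k\<in>S. \<not> D k"
  shows "exp (u * \<theta>) * measure_pmf.prob (config_pmf \<delta> n p)
           {c. deletions_on n a b D c \<and> \<theta> \<le> real (card {k\<in>S. T k \<noteq> fst (c!k)})}
       \<le> (\<Prod>k<n. pattern_factor \<delta> a b D k) * (\<Prod>k\<in>S. 1 + mismatch_prob (p k) (T k) * (exp u - 1))"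
proof -
  define g where "g = (\<lambda>k (z::bool \<times> bool). (if a \<le> k \<and> k \<le> b then (if snd z = D k then 1 else 0) else (1::real))
      * (if k \<in> S then exp (u * (if T k \<noteq> fst z then 1 else 0)) else 1))"
  have finS: "finite S" using S(1) by (rule finite_subset) auto
  have Sn: "S \<inter> {..<n} = S" "{..<n} \<inter> S = S" "{..<n} \<inter> {x. x \<in> S} = S" using S(1) by auto
  have "exp (u * \<theta>) * measure_pmf.prob (config_pmf \<delta> n p)
           {c. deletions_on n a b D c \<and> \<theta> \<le> real (card {k\<in>S. T k \<noteq> fst (c!k)})}
      \<le> (\<Prod>k<n. expect_bernoulli_pair (p k) \<delta> (g k))"
  proof (rule markov_config_pmf_prod[OF p01 d01])
    show "\<And>k z. 0 \<le> g k z" "0 \<le> exp (u * \<theta>)" by (simp_all add: g_def)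
    fix c assume c: "c \<in> {c. deletions_on n a b D c \<and> \<theta> \<le> real (card {k\<in>S. T k \<noteq> fst (c!k)})}"
    have "(\<Prod>k<n. g k (c!k)) = (\<Prod>k\<in>S. exp (u * (if T k \<noteq> fst (c!k) then 1 else 0)))"
      using c by (simp add: g_def deletions_on_def prod.If_cases Sn cong: if_cong)
    also have "\<dots> = exp (u * (\<Sum>k\<in>S. (if T k \<noteq> fst (c!k) then 1 else 0)))"
      using finS by (simp add: exp_sum sum_distrib_left)
    also have "(\<Sum>k\<in>S. (if T k \<noteq> fst (c!k) then 1 else 0)) = real (card {k\<in>S. T k \<noteq> fst (c!k)})"
      using finS by (simp add: sum.If_cases Int_def conj_commute)
    finally show "exp (u * \<theta>) \<le> (\<Prod>k<n. g k (c!k))" using c u by (auto intro: mult_left_mono)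
  qed
  also have "\<dots> = (\<Prod>k<n. pattern_factor \<delta> a b D k
      * (if k \<in> S then 1 + mismatch_prob (p k) (T k) * (exp u - 1) else 1))"
  proof (intro prod.cong refl)
    fix k
    show "expect_bernoulli_pair (p k) \<delta> (g k) = pattern_factor \<delta> a b D k
        * (if k \<in> S then 1 + mismatch_prob (p k) (T k) * (exp u - 1) else 1)"
      using S by (cases "k \<in> S"; cases "T k")
        (auto simp: g_def pattern_factor_def expect_bernoulli_pair_def mismatch_prob_def algebra_simps)
  qed
  also have "\<dots> = (\<Prod>k<n. pattern_factor \<delta> a b D k) * (\<Prod>k\<in>S. 1 + mismatch_prob (p k) (T k) * (exp u - 1))"
    by (simp add: prod.distrib prod.If_cases Sn)
  finally show ?thesis .
qed

lemma prod_one_plus_le_exp_sum: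
  assumes p01: "\<And>k. k \<in> S \<Longrightarrow> 0 \<le> p k \<and> p k \<le> 1" and u: "0 \<le> u"
  shows "(\<Prod>k\<in>S. 1 + mismatch_prob (p k) (T k) * (exp u - 1))
      \<le> exp ((exp u - 1) * (\<Sum>k\<in>S. mismatch_prob (p k) (T k)))"
proof (cases "finite S")
  case True
  have "(\<Prod>k\<in>S. 1 + mismatch_prob (p k) (T k) * (exp u - 1))
      \<le> (\<Prod>k\<in>S. exp (mismatch_prob (p k) (T k) * (exp u - 1)))"
  proof (rule prod_mono)
    fix k assume "k \<in> S"
    then have "0 \<le> mismatch_prob (p k) (T k) * (exp u - 1)"
      using p01 u by (simp add: mismatch_prob_def)
    then show "0 \<le> 1 + mismatch_prob (p k) (T k) * (exp u - 1)
        \<and> 1 + mismatch_prob (p k) (T k) * (exp u - 1) \<le> exp (mismatch_prob (p k) (T k) * (exp u - 1))"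
      by (simp add: exp_ge_add_one_self add.commute)
  qed
  also have "\<dots> = exp ((exp u - 1) * (\<Sum>k\<in>S. mismatch_prob (p k) (T k)))"
    using True by (simp add: exp_sum sum_distrib_left mult.commute)
  finally show ?thesis .
qed simp

lemma prob_deletions_on_many_mismatches_le:
  assumes p01: "\<And>k. k < n \<Longrightarrow> 0 \<le> p k \<and> p k \<le> 1" and d01: "0 \<le> \<delta>" "\<delta> \<le> 1" and u: "0 \<le> u"
    and S: "S \<subseteq> {k. a \<le> k \<and> k \<le> b \<and> k < n}" "\<forall>k\<in>S. \<not> D k"
    and mean: "(\<Sum>k\<in>S. mismatch_prob (p k) (T k)) \<le> B"
  shows "measure_pmf.prob (config_pmf \<delta> n p)
           {c. deletions_on n a b D c \<and> \<theta> \<le> real (card {k\<in>S. T k \<noteq> fst (c!k)})}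
       \<le> (\<Prod>k<n. pattern_factor \<delta> a b D k) * exp (- u * \<theta> + (exp u - 1) * B)"
proof -
  let ?P = "measure_pmf.prob (config_pmf \<delta> n p)
    {c. deletions_on n a b D c \<and> \<theta> \<le> real (card {k\<in>S. T k \<noteq> fst (c!k)})}"
  let ?F = "\<Prod>k<n. pattern_factor \<delta> a b D k"
  have F: "0 \<le> ?F" unfolding pattern_factor_def using d01 by (auto intro!: prod_nonneg)
  have "(\<Prod>k\<in>S. 1 + mismatch_prob (p k) (T k) * (exp u - 1))
      \<le> exp ((exp u - 1) * (\<Sum>k\<in>S. mismatch_prob (p k) (T k)))"
    using S(1) p01 u by (intro prod_one_plus_le_exp_sum) auto
  also have "\<dots> \<le> exp ((exp u - 1) * B)"
    using mean u by (simp add: mult_left_mono)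
  finally have "(\<Prod>k\<in>S. 1 + mismatch_prob (p k) (T k) * (exp u - 1)) \<le> exp ((exp u - 1) * B)" .
  then have "exp (u * \<theta>) * ?P \<le> ?F * exp ((exp u - 1) * B)"
    using exp_moment_deletions_on_mismatches[OF p01 d01 u S, where \<theta>=\<theta> and T=T] F
    by (meson mult_left_mono order_trans)
  then have "?P \<le> ?F * exp ((exp u - 1) * B) / exp (u * \<theta>)"
    by (simp add: field_simps)
  also have "\<dots> = ?F * exp (- u * \<theta> + (exp u - 1) * B)"
    using exp_diff[of "(exp u - 1) * B" "u * \<theta>"] by (simp add: algebra_simps)
  finally show ?thesis .
qed

section \<open>A fresh trace rules out a defective chunk\<close>

definition few_deletions :: "nat \<Rightarrow> nat \<Rightarrow> (bool \<times> bool) list \<Rightarrow> bool" where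
  "few_deletions K N cs \<longleftrightarrow> (\<forall>s. card {k. s \<le> k \<and> k < s + N \<and> k < length cs \<and> snd (cs!k)} \<le> K)"

definition typical_bits :: "(nat \<Rightarrow> real) \<Rightarrow> nat \<Rightarrow> (bool \<times> bool) list \<Rightarrow> bool" where
  "typical_bits p N cs \<longleftrightarrow>
     (\<forall>s. (\<Sum>k | s \<le> k \<and> k < s + N \<and> k < length cs. mismatch_prob (p k) (fst (cs!k))) \<le> 3/8 * real N)"

lemma sum_mismatch_prob_le:
  assumes p01: "\<And>k. k < length cs \<Longrightarrow> 0 \<le> p k \<and> p k \<le> 1"
    and S: "S \<subseteq> {k. s \<le> k \<and> k < s + N \<and> k < length cs}" and typical: "typical_bits p N cs"
  shows "(\<Sum>k\<in>S. mismatch_prob (p k) (fst (cs!k))) \<le> 3/8 * real N"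
proof -
  have "(\<Sum>k\<in>S. mismatch_prob (p k) (fst (cs!k)))
      \<le> (\<Sum>k | s \<le> k \<and> k < s + N \<and> k < length cs. mismatch_prob (p k) (fst (cs!k)))"
    by (rule sum_mono2) (use S p01 in \<open>auto simp: mismatch_prob_def\<close>)
  also have "\<dots> \<le> 3/8 * real N" using typical unfolding typical_bits_def by blast
  finally show ?thesis .
qed

text \<open>A trace whose
  deletions on the three blocks are \<open>witness_deletions\<close> is a distant match of \<open>x\<close> unless its bits
  differ too much from those of \<open>x\<close> on \<open>L\<close> or \<open>R\<close>.\<close>
locale config_chunk = chunk_blocks "\<lambda>k. \<not> snd (cs ! k)" "length cs" i w
  for cs :: "(bool \<times> bool) list" and i w :: nat
begin

definition witness_deletions :: "nat \<Rightarrow> bool" where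
  "witness_deletions k \<longleftrightarrow> snd (cs!k) \<and> \<not> (startM \<le> k \<and> k \<le> lastM)"

lemma distant_matches_of_witness:
  assumes defective: "\<not> deletion_free w (window w (config_trace cs) (i + w))"
    and pattern: "deletions_on (length cs) startL lastR witness_deletions c"
    and left: "real (card {k \<in> set (filter (\<lambda>k. \<not> snd (cs!k)) [startL..<startM]). fst (cs!k) \<noteq> fst (c!k)})
      \<le> 5 * real w / 12"
    and right: "real (card {k \<in> set (filter (\<lambda>k. \<not> snd (cs!k)) [startR..<Suc lastR]). fst (cs!k) \<noteq> fst (c!k)})
      \<le> 5 * real w / 12"
  shows "distant_matches w (config_trace cs) i (config_trace c)"
proof -
  have "length c = length cs" using pattern by (simp add: deletions_on_def)
  then have "config_trace c = map (\<lambda>k. (fst (c!k), k)) (filter (\<lambda>k. \<not> snd (c!k)) [0..<length cs])"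
    by (simp add: config_trace_def)
  moreover have "config_trace cs = map (\<lambda>k. (fst (cs!k), k)) surv" by (simp add: config_trace_def)
  moreover have "distant_matches w (map (\<lambda>k. (fst (cs!k), k)) surv) i
      (map (\<lambda>k. (fst (c!k), k)) (filter (\<lambda>k. \<not> snd (c!k)) [0..<length cs]))"
  proof (rule distant_matches_of_pattern[OF _ _ left right])
    fix k assume "startL \<le> k" "k \<le> lastR"
    then show "(\<not> snd (c!k)) \<longleftrightarrow> \<not> snd (cs!k) \<or> (startM \<le> k \<and> k \<le> lastM)"
      using pattern block_order(5) by (auto simp: deletions_on_def witness_deletions_def)
  next
    show "startM + w \<le> lastM"
      using middle_span_long defective by (simp add: config_trace_def)
  qed
  ultimately show ?thesis by simp
qed

lemma prob_witness_deletions_ge: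
  assumes p01: "\<And>k. k < length cs \<Longrightarrow> 0 \<le> p k \<and> p k \<le> 1" and d01: "0 \<le> \<delta>" "\<delta> \<le> 1"
    and few: "few_deletions K (3 * w + K + 1) cs"
  shows "\<delta> ^ K * (1 - \<delta>) ^ (3 * w + K)
    \<le> measure_pmf.prob (config_pmf \<delta> (length cs) p) {c. deletions_on (length cs) startL lastR witness_deletions c}"
proof -
  have "\<delta> ^ K * (1 - \<delta>) ^ (3 * w + K) \<le> (\<Prod>k<length cs. pattern_factor \<delta> startL lastR witness_deletions k)"
  proof (rule prod_pattern_factor_ge[OF d01])
    have "card {k. startL \<le> k \<and> k < Suc lastR \<and> \<not> \<not> snd (cs!k)} \<le> K"
      using few block_order(5) by (intro block_deletions_le(1)) (auto simp: few_deletions_def)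
    then show "card {k. k < length cs \<and> startL \<le> k \<and> k \<le> lastR \<and> witness_deletions k} \<le> K"
      by (rule order_trans[rotated], intro card_mono) (auto simp: witness_deletions_def)
    have "card {k. k < length cs \<and> startL \<le> k \<and> k \<le> lastR \<and> \<not> witness_deletions k} \<le> card {startL..<Suc lastR}"
      by (intro card_mono) auto
    also have "\<dots> \<le> 3 * w + K"
      using few block_order(5) by (simp, intro block_deletions_le(2)) (auto simp: few_deletions_def)
    finally show "card {k. k < length cs \<and> startL \<le> k \<and> k \<le> lastR \<and> \<not> witness_deletions k} \<le> 3 * w + K" .
  qed
  then show ?thesis using prob_deletions_on[OF p01 d01] by simp
qed

lemma prob_witness_many_mismatches_le:
  assumes p01: "\<And>k. k < length cs \<Longrightarrow> 0 \<le> p k \<and> p k \<le> 1" and d01: "0 \<le> \<delta>" "\<delta> \<le> 1" and u: "0 \<le> u"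
    and few: "few_deletions K (3 * w + K + 1) cs" and typical: "typical_bits p (w + K) cs"
    and block: "S = set (filter (\<lambda>k. \<not> snd (cs!k)) [startL..<startM])
      \<or> S = set (filter (\<lambda>k. \<not> snd (cs!k)) [startR..<Suc lastR])"
  shows "measure_pmf.prob (config_pmf \<delta> (length cs) p)
      {c. deletions_on (length cs) startL lastR witness_deletions c
        \<and> 5 * real w / 12 \<le> real (card {k\<in>S. fst (cs!k) \<noteq> fst (c!k)})}
    \<le> (\<Prod>k<length cs. pattern_factor \<delta> startL lastR witness_deletions k)
      * exp (- u * (5 * real w / 12) + (exp u - 1) * (3/8 * real (w + K)))"
proof (rule prob_deletions_on_many_mismatches_le[OF p01 d01 u])
  have sparse: "\<And>s. card {k. s \<le> k \<and> k < s + (3 * w + K + 1) \<and> k < length cs \<and> \<not> \<not> snd (cs!k)} \<le> K"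
    using few by (simp add: few_deletions_def)
  from block have "S \<subseteq> {k. startL \<le> k \<and> k < startL + (w + K) \<and> k < length cs}
      \<or> S \<subseteq> {k. startR \<le> k \<and> k < startR + (w + K) \<and> k < length cs}"
  proof
    assume "S = set (filter (\<lambda>k. \<not> snd (cs!k)) [startL..<startM])"
    then show ?thesis using block_order block_deletions_le(3)[OF sparse] by auto
  next
    assume "S = set (filter (\<lambda>k. \<not> snd (cs!k)) [startR..<Suc lastR])"
    then show ?thesis using block_order block_deletions_le(4)[OF sparse] by (auto simp del: upt_Suc)
  qed
  then show "(\<Sum>k\<in>S. mismatch_prob (p k) (fst (cs!k))) \<le> 3/8 * real (w + K)"
    using sum_mismatch_prob_le[OF p01 _ typical] by blast
  show "S \<subseteq> {k. startL \<le> k \<and> k \<le> lastR \<and> k < length cs}" "\<forall>k\<in>S. \<not> witness_deletions k"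
    using block block_order by (auto simp: witness_deletions_def simp del: upt_Suc)
qed

lemma prob_distant_matches_ge:
  assumes p01: "\<And>k. k < length cs \<Longrightarrow> 0 \<le> p k \<and> p k \<le> 1" and d01: "0 \<le> \<delta>" "\<delta> \<le> 1" and u: "0 \<le> u"
    and few: "few_deletions K (3 * w + K + 1) cs" and typical: "typical_bits p (w + K) cs"
    and defective: "\<not> deletion_free w (window w (config_trace cs) (i + w))"
  shows "\<delta> ^ K * (1 - \<delta>) ^ (3 * w + K) * (1 - 2 * exp (- u * (5 * real w / 12) + (exp u - 1) * (3/8 * real (w + K))))
    \<le> measure_pmf.prob (trace_pmf \<delta> (length cs) p) {y. distant_matches w (config_trace cs) i y}"
proof -
  define \<epsilon> where "\<epsilon> = exp (- u * (5 * real w / 12) + (exp u - 1) * (3/8 * real (w + K)))"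
  let ?C = "config_pmf \<delta> (length cs) p"
  let ?W = "{c. deletions_on (length cs) startL lastR witness_deletions c}"
  let ?F = "\<Prod>k<length cs. pattern_factor \<delta> startL lastR witness_deletions k"
  let ?SL = "set (filter (\<lambda>k. \<not> snd (cs!k)) [startL..<startM])"
  let ?SR = "set (filter (\<lambda>k. \<not> snd (cs!k)) [startR..<Suc lastR])"
  let ?bad = "\<lambda>S. {c. c \<in> ?W \<and> 5 * real w / 12 \<le> real (card {k\<in>S. fst (cs!k) \<noteq> fst (c!k)})}"
  let ?D = "{c. distant_matches w (config_trace cs) i (config_trace c)}"
  have "?W \<subseteq> ?D \<union> ?bad ?SL \<union> ?bad ?SR"
    using distant_matches_of_witness[OF defective] by fastforce
  then have "measure_pmf.prob ?C ?W \<le> measure_pmf.prob ?C (?D \<union> ?bad ?SL \<union> ?bad ?SR)"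
    by (rule measure_pmf.finite_measure_mono) simp
  then have "?F \<le> measure_pmf.prob ?C (?D \<union> ?bad ?SL \<union> ?bad ?SR)"
    using prob_deletions_on[OF p01 d01] by simp
  also have "\<dots> \<le> measure_pmf.prob ?C ?D + measure_pmf.prob ?C (?bad ?SL) + measure_pmf.prob ?C (?bad ?SR)"
    using measure_Un_le[of "?D \<union> ?bad ?SL" ?C "?bad ?SR"] measure_Un_le[of ?D ?C "?bad ?SL"] by simp
  finally have "?F \<le> measure_pmf.prob ?C ?D + measure_pmf.prob ?C (?bad ?SL) + measure_pmf.prob ?C (?bad ?SR)" .
  moreover have "measure_pmf.prob ?C (?bad ?SL) \<le> ?F * \<epsilon>" "measure_pmf.prob ?C (?bad ?SR) \<le> ?F * \<epsilon>"
    using prob_witness_many_mismatches_le[OF p01 d01 u few typical, of ?SL]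
      prob_witness_many_mismatches_le[OF p01 d01 u few typical, of ?SR] by (simp_all add: \<epsilon>_def)
  moreover have "measure_pmf.prob ?C ?D
      = measure_pmf.prob (trace_pmf \<delta> (length cs) p) {y. distant_matches w (config_trace cs) i y}"
    by (simp add: trace_pmf_eq_map_config measure_map_pmf vimage_def)
  moreover have "?F * (1 - 2 * \<epsilon>) = ?F - 2 * (?F * \<epsilon>)" by (simp add: algebra_simps)
  ultimately have "?F * (1 - 2 * \<epsilon>) \<le> measure_pmf.prob (trace_pmf \<delta> (length cs) p)
      {y. distant_matches w (config_trace cs) i y}"
    by (smt (verit))
  moreover have "\<delta> ^ K * (1 - \<delta>) ^ (3 * w + K) \<le> ?F"
    using prob_witness_deletions_ge[OF p01 d01 few] prob_deletions_on[OF p01 d01] by simp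
  moreover have "0 \<le> \<delta> ^ K * (1 - \<delta>) ^ (3 * w + K)" using d01 by simp
  \<comment> \<open>if \<open>1 - 2 \<epsilon> < 0\<close> the claim is trivial\<close>
  ultimately show ?thesis unfolding \<epsilon>_def[symmetric]
    by (smt (verit) measure_nonneg mult_right_mono mult_nonneg_nonpos)
qed

end

section \<open>Configurations are typical with high probability\<close>

lemma prob_config_pmf_some_window_le:
  assumes "\<And>c s. length c = n \<Longrightarrow> B s c \<Longrightarrow> s < n"
  shows "measure_pmf.prob (config_pmf \<delta> n p) {c. \<exists>s. B s c}
    \<le> (\<Sum>s<n. measure_pmf.prob (config_pmf \<delta> n p) {c. length c = n \<and> B s c})"
proof -
  have "measure_pmf.prob (config_pmf \<delta> n p) {c. \<exists>s. B s c}
      = measure_pmf.prob (config_pmf \<delta> n p) (\<Union>s\<in>{..<n}. {c. length c = n \<and> B s c})"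
    using assms by (intro measure_pmf.finite_measure_eq_AE)
      (auto simp: AE_measure_pmf_iff dest: length_in_set_config_pmf)
  also have "\<dots> \<le> (\<Sum>s<n. measure_pmf.prob (config_pmf \<delta> n p) {c. length c = n \<and> B s c})"
    by (rule measure_UNION_le) auto
  finally show ?thesis .
qed

lemma prob_all_deleted:
  assumes p01: "\<And>k. k < n \<Longrightarrow> 0 \<le> p k \<and> p k \<le> 1" and d01: "0 \<le> \<delta>" "\<delta> \<le> 1"
    and U: "U \<subseteq> {..<n}"
  shows "measure_pmf.prob (config_pmf \<delta> n p) {c. length c = n \<and> (\<forall>k\<in>U. snd (c!k))} = \<delta> ^ card U"
proof -
  define g where "g = (\<lambda>k (z::bool \<times> bool). if k \<in> U then (if snd z then 1 else 0) else (1::real))"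
  have "measure_pmf.prob (config_pmf \<delta> n p) {c. length c = n \<and> (\<forall>k\<in>U. snd (c!k))}
      = (\<Prod>k<n. expect_bernoulli_pair (p k) \<delta> (g k))"
  proof (rule prob_config_pmf_eq_prod[OF p01 d01])
    show "\<And>k z. 0 \<le> g k z" by (simp add: g_def)
    fix c assume "c \<in> set_pmf (config_pmf \<delta> n p)"
    then have "length c = n" by (rule length_in_set_config_pmf)
    then show "indicator {c. length c = n \<and> (\<forall>k\<in>U. snd (c!k))} c = (\<Prod>k<n. g k (c!k))"
      unfolding g_def prod_if_01 using U by (auto simp: indicator_def)
  qed
  also have "\<dots> = (\<Prod>k<n. if k \<in> U then \<delta> else 1)"
    by (intro prod.cong refl) (auto simp: g_def expect_bernoulli_pair_def algebra_simps)
  also have "\<dots> = \<delta> ^ card U"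
    using U by (simp add: prod.If_cases Int_absorb1 Int_absorb2 Collect_mem_eq)
  finally show ?thesis .
qed

lemma prob_many_deletions_in_window_le:
  assumes p01: "\<And>k. k < n \<Longrightarrow> 0 \<le> p k \<and> p k \<le> 1" and d01: "0 \<le> \<delta>" "\<delta> \<le> 1"
  shows "measure_pmf.prob (config_pmf \<delta> n p)
      {c. length c = n \<and> K < card {k. s \<le> k \<and> k < s + N \<and> k < length c \<and> snd (c!k)}}
    \<le> real (N choose (K + 1)) * \<delta> ^ (K + 1)"
proof -
  define I where "I = {k. s \<le> k \<and> k < s + N \<and> k < n}"
  define Fam where "Fam = {U. U \<subseteq> I \<and> card U = K + 1}"
  have finI: "finite I" by (simp add: I_def)
  have "card I \<le> card {s..<s + N}" by (intro card_mono) (auto simp: I_def)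
  then have cardI: "card I \<le> N" by simp
  have "{c. length c = n \<and> K < card {k. s \<le> k \<and> k < s + N \<and> k < length c \<and> snd (c!k)}}
      \<subseteq> (\<Union>U\<in>Fam. {c. length c = n \<and> (\<forall>k\<in>U. snd (c!k))})"
  proof
    fix c assume c: "c \<in> {c. length c = n \<and> K < card {k. s \<le> k \<and> k < s + N \<and> k < length c \<and> snd (c!k)}}"
    then obtain U where "U \<subseteq> {k. s \<le> k \<and> k < s + N \<and> k < length c \<and> snd (c!k)}" "card U = K + 1"
      by (metis (no_types, lifting) Suc_eq_plus1 Suc_leI mem_Collect_eq obtain_subset_with_card_n)
    then show "c \<in> (\<Union>U\<in>Fam. {c. length c = n \<and> (\<forall>k\<in>U. snd (c!k))})"
      using c by (auto simp: Fam_def I_def)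
  qed
  then have "measure_pmf.prob (config_pmf \<delta> n p)
      {c. length c = n \<and> K < card {k. s \<le> k \<and> k < s + N \<and> k < length c \<and> snd (c!k)}}
    \<le> (\<Sum>U\<in>Fam. measure_pmf.prob (config_pmf \<delta> n p) {c. length c = n \<and> (\<forall>k\<in>U. snd (c!k))})"
    using finI by (intro order_trans[OF measure_pmf.finite_measure_mono measure_UNION_le])
      (auto simp: Fam_def finite_Collect_subsets)
  also have "\<dots> = real (card Fam) * \<delta> ^ (K + 1)"
    using prob_all_deleted[OF p01 d01] by (simp add: Fam_def I_def subset_eq)
  also have "card Fam = card I choose (K + 1)"
    unfolding Fam_def by (rule n_subsets[OF finI])
  also have "real (card I choose (K + 1)) * \<delta> ^ (K + 1) \<le> real (N choose (K + 1)) * \<delta> ^ (K + 1)"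
    using d01 cardI by (intro mult_right_mono) (auto intro: binomial_right_mono)
  finally show ?thesis .
qed

lemma prob_not_few_deletions_le:
  assumes p01: "\<And>k. k < n \<Longrightarrow> 0 \<le> p k \<and> p k \<le> 1" and d01: "0 \<le> \<delta>" "\<delta> \<le> 1"
  shows "measure_pmf.prob (config_pmf \<delta> n p) {c. \<not> few_deletions K N c}
    \<le> real n * (real (N choose (K + 1)) * \<delta> ^ (K + 1))"
proof -
  have "measure_pmf.prob (config_pmf \<delta> n p) {c. \<not> few_deletions K N c}
      \<le> (\<Sum>s<n. measure_pmf.prob (config_pmf \<delta> n p)
          {c. length c = n \<and> K < card {k. s \<le> k \<and> k < s + N \<and> k < length c \<and> snd (c!k)}})"
    unfolding few_deletions_def not_all not_le
  proof (rule prob_config_pmf_some_window_le)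
    fix c s assume "length c = n" "K < card {k. s \<le> k \<and> k < s + N \<and> k < length c \<and> snd (c!k)}"
    then show "s < n" by (metis (no_types, lifting) card.empty empty_Collect_eq not_less0 order.strict_trans1)
  qed
  also have "\<dots> \<le> (\<Sum>s<n. real (N choose (K + 1)) * \<delta> ^ (K + 1))"
    by (intro sum_mono prob_many_deletions_in_window_le[OF p01 d01])
  finally show ?thesis by simp
qed

text \<open>\<open>mismatch_mgf v x\<close> is the moment generating function at \<open>v\<close> of \<open>mismatch_prob x t\<close>
  for a \<open>Bernoulli(x)\<close> bit \<open>t\<close>.\<close>
definition mismatch_mgf :: "real \<Rightarrow> real \<Rightarrow> real" where
  "mismatch_mgf v x = x * exp (v * (1 - x)) + (1 - x) * exp (v * x)"

lemma prob_atypical_window_le: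
  fixes s N :: nat
  assumes p01: "\<And>k. k < n \<Longrightarrow> 0 \<le> p k \<and> p k \<le> 1" and d01: "0 \<le> \<delta>" "\<delta> \<le> 1" and v: "0 \<le> v"
  defines "J \<equiv> {k. s \<le> k \<and> k < s + N \<and> k < n}"
  shows "measure_pmf.prob (config_pmf \<delta> n p)
      {c. length c = n \<and> 3/8 * real N < (\<Sum>k | s \<le> k \<and> k < s + N \<and> k < length c. mismatch_prob (p k) (fst (c!k)))}
    \<le> exp (- v * (3/8 * real N)) * (\<Prod>k\<in>J. mismatch_mgf v (p k))"
proof -
  define g where "g = (\<lambda>k (z::bool \<times> bool). if k \<in> J then exp (v * mismatch_prob (p k) (fst z)) else 1)"
  have JI: "{..<n} \<inter> {k. k \<in> J} = J" "{..<n} \<inter> J = J" by (auto simp: J_def)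
  have "exp (v * (3/8 * real N)) * measure_pmf.prob (config_pmf \<delta> n p)
      {c. length c = n \<and> 3/8 * real N < (\<Sum>k | s \<le> k \<and> k < s + N \<and> k < length c. mismatch_prob (p k) (fst (c!k)))}
    \<le> (\<Prod>k<n. expect_bernoulli_pair (p k) \<delta> (g k))"
  proof (rule markov_config_pmf_prod[OF p01 d01])
    show "\<And>k z. 0 \<le> g k z" "0 \<le> exp (v * (3/8 * real N))" by (simp_all add: g_def)
    fix c :: "(bool \<times> bool) list" assume c: "c \<in> {c. length c = n \<and>
      3/8 * real N < (\<Sum>k | s \<le> k \<and> k < s + N \<and> k < length c. mismatch_prob (p k) (fst (c!k)))}"
    have "(\<Prod>k<n. g k (c!k)) = (\<Prod>k\<in>J. exp (v * mismatch_prob (p k) (fst (c!k))))"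
      unfolding g_def by (simp add: prod.If_cases JI)
    also have "\<dots> = exp (v * (\<Sum>k\<in>J. mismatch_prob (p k) (fst (c!k))))"
      by (simp add: exp_sum sum_distrib_left J_def)
    finally have "(\<Prod>k<n. g k (c!k)) = exp (v * (\<Sum>k\<in>J. mismatch_prob (p k) (fst (c!k))))" .
    moreover have "v * (3/8 * real N) \<le> v * (\<Sum>k\<in>J. mismatch_prob (p k) (fst (c!k)))"
      using c v by (intro mult_left_mono) (auto simp: J_def)
    ultimately show "exp (v * (3/8 * real N)) \<le> (\<Prod>k<n. g k (c!k))" by simp
  qed
  also have "\<dots> = (\<Prod>k\<in>J. mismatch_mgf v (p k))"
  proof -
    have "(\<Prod>k<n. expect_bernoulli_pair (p k) \<delta> (g k)) = (\<Prod>k<n. if k \<in> J then mismatch_mgf v (p k) else 1)"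
      by (intro prod.cong refl)
        (auto simp: g_def expect_bernoulli_pair_def mismatch_mgf_def mismatch_prob_def algebra_simps)
    then show ?thesis by (simp add: prod.If_cases JI)
  qed
  finally show ?thesis by (simp add: exp_minus field_simps)
qed

lemma prob_not_typical_bits_le:
  assumes p01: "\<And>k. k < n \<Longrightarrow> 0 \<le> p k \<and> p k \<le> 1" and d01: "0 \<le> \<delta>" "\<delta> \<le> 1" and v: "0 \<le> v"
  shows "measure_pmf.prob (config_pmf \<delta> n p) {c. \<not> typical_bits p N c}
    \<le> (\<Sum>s<n. exp (- v * (3/8 * real N)) * (\<Prod>k | s \<le> k \<and> k < s + N \<and> k < n. mismatch_mgf v (p k)))"
proof -
  have "measure_pmf.prob (config_pmf \<delta> n p) {c. \<not> typical_bits p N c}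
      \<le> (\<Sum>s<n. measure_pmf.prob (config_pmf \<delta> n p) {c. length c = n \<and>
          3/8 * real N < (\<Sum>k | s \<le> k \<and> k < s + N \<and> k < length c. mismatch_prob (p k) (fst (c!k)))})"
    unfolding typical_bits_def not_all not_le
  proof (rule prob_config_pmf_some_window_le)
    fix c s assume len: "length c = n"
      and big: "3/8 * real N < (\<Sum>k | s \<le> k \<and> k < s + N \<and> k < length c. mismatch_prob (p k) (fst (c!k)))"
    show "s < n"
    proof (rule ccontr)
      assume "\<not> s < n"
      then have empty: "{k. s \<le> k \<and> k < s + N \<and> k < length c} = {}" using len by auto
      show False using big unfolding empty by simp
    qed
  qed
  also have "\<dots> \<le> (\<Sum>s<n. exp (- v * (3/8 * real N)) * (\<Prod>k | s \<le> k \<and> k < s + N \<and> k < n. mismatch_mgf v (p k)))"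
    by (intro sum_mono prob_atypical_window_le[OF p01 d01 v])
  finally show ?thesis .
qed

section \<open>Averaging over the uniform probabilities\<close>

abbreviation uniform01 :: "real measure" where "uniform01 \<equiv> uniform_measure lborel {0..1::real}"

lemma prob_space_uniform01: "prob_space uniform01"
  by (rule prob_space_uniform_measure) auto

lemma AE_uniform01: "AE x in uniform01. 0 \<le> x \<and> x \<le> 1"
  by (rule AE_uniform_measureI) auto

lemma mismatch_mgf_le:
  assumes "0 \<le> v" "v \<le> 1" "0 \<le> x" "x \<le> 1"
  shows "mismatch_mgf v x \<le> 1 + (2 * v + v^2) * (x * (1 - x))"
proof -
  have e1: "exp (v * (1 - x)) \<le> 1 + v * (1 - x) + (v * (1 - x))^2"
    by (rule exp_bound) (use assms in \<open>auto intro: mult_le_one\<close>)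
  have e2: "exp (v * x) \<le> 1 + v * x + (v * x)^2"
    by (rule exp_bound) (use assms in \<open>auto intro: mult_le_one\<close>)
  have "mismatch_mgf v x \<le> x * (1 + v * (1 - x) + (v * (1 - x))^2) + (1 - x) * (1 + v * x + (v * x)^2)"
    unfolding mismatch_mgf_def using assms by (intro add_mono mult_left_mono e1 e2) auto
  also have "\<dots> = 1 + (2 * v + v^2) * (x * (1 - x))" by (simp add: power2_eq_square algebra_simps)
  finally show ?thesis .
qed

lemma uniform01_eq_density: "uniform01 = density lborel (\<lambda>x. ennreal (indicator {0..1} x))"
  by (simp add: uniform_measure_def ennreal_indicator divide_ennreal_def)

lemma integral_uniform01_quadratic: "(\<integral>x. 1 + c * (x * (1 - x)) \<partial>uniform01) = 1 + c / 6"
proof -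
  have "(\<integral>x. 1 + c * (x * (1 - x)) \<partial>uniform01) = (\<integral>x. indicator {0..1} x *\<^sub>R (1 + c * (x * (1 - x))) \<partial>lborel)"
    unfolding uniform01_eq_density by (subst integral_density) auto
  also have "\<dots> = (\<lambda>x. x + c * (x^2/2 - x^3/3)) 1 - (\<lambda>x. x + c * (x^2/2 - x^3/3)) 0"
  proof (rule integral_FTC_atLeastAtMost)
    show "continuous_on {0..1} (\<lambda>x::real. 1 + c * (x * (1 - x)))" by (intro continuous_intros)
    fix x :: real
    show "((\<lambda>x. x + c * (x^2/2 - x^3/3)) has_vector_derivative 1 + c * (x * (1 - x))) (at x within {0..1})"
      unfolding has_real_derivative_iff_has_vector_derivative[symmetric]
      by (rule derivative_eq_intros refl | simp add: power2_eq_square algebra_simps)+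
  qed simp
  also have "\<dots> = 1 + c / 6" by simp
  finally show ?thesis .
qed

lemma integrable_uniform01_bounded:
  fixes f :: "real \<Rightarrow> real"
  assumes "f \<in> borel_measurable borel" "\<And>x. 0 \<le> x \<Longrightarrow> x \<le> 1 \<Longrightarrow> \<bar>f x\<bar> \<le> B"
  shows "integrable uniform01 f"
proof -
  interpret prob_space uniform01 by (rule prob_space_uniform01)
  show ?thesis
  proof (rule integrable_const_bound[where B=B])
    show "AE x in uniform01. norm (f x) \<le> B" using AE_uniform01 by eventually_elim (use assms in auto)
    show "f \<in> borel_measurable uniform01" using assms(1) by simp
  qed
qed

lemma mismatch_mgf_measurable: "mismatch_mgf v \<in> borel_measurable borel"
  unfolding mismatch_mgf_def by measurable

lemma abs_mismatch_mgf_le: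
  assumes "0 \<le> v" "v \<le> 1" "0 \<le> x" "x \<le> 1"
  shows "\<bar>mismatch_mgf v x\<bar> \<le> 3"
proof -
  have "exp (v * (1 - x)) \<le> exp 1" "exp (v * x) \<le> exp 1"
    using assms by (auto intro: mult_le_one)
  moreover have "exp (1::real) \<le> 3" using exp_le by simp
  ultimately have "exp (v * (1 - x)) \<le> 3" "exp (v * x) \<le> 3" by linarith+
  then have "mismatch_mgf v x \<le> x * 3 + (1 - x) * 3"
    unfolding mismatch_mgf_def using assms by (intro add_mono mult_left_mono) auto
  moreover have "0 \<le> mismatch_mgf v x" unfolding mismatch_mgf_def using assms by simp
  ultimately show ?thesis by simp
qed

lemma integral_mismatch_mgf_le:
  assumes "0 \<le> v" "v \<le> 1"
  shows "(\<integral>x. mismatch_mgf v x \<partial>uniform01) \<le> 1 + (2 * v + v^2) / 6"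
proof -
  have "(\<integral>x. mismatch_mgf v x \<partial>uniform01) \<le> (\<integral>x. 1 + (2 * v + v^2) * (x * (1 - x)) \<partial>uniform01)"
  proof (rule integral_mono_AE)
    show "integrable uniform01 (mismatch_mgf v)"
      by (rule integrable_uniform01_bounded[OF mismatch_mgf_measurable]) (use abs_mismatch_mgf_le assms in auto)
    show "integrable uniform01 (\<lambda>x. 1 + (2 * v + v^2) * (x * (1 - x)))"
    proof (rule integrable_uniform01_bounded[where B="1 + (2 * v + v^2)"])
      show "(\<lambda>x. 1 + (2 * v + v^2) * (x * (1 - x))) \<in> borel_measurable borel" by measurable
      fix x :: real assume x: "0 \<le> x" "x \<le> 1"
      have y: "0 \<le> x * (1 - x)" "x * (1 - x) \<le> 1" using x by (auto intro: mult_le_one)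
      have c: "0 \<le> 2 * v + v^2" using assms by simp
      have "0 \<le> (2 * v + v^2) * (x * (1 - x))" using y c by simp
      moreover have "(2 * v + v^2) * (x * (1 - x)) \<le> 2 * v + v^2" using y c mult_left_le by blast
      ultimately show "\<bar>1 + (2 * v + v^2) * (x * (1 - x))\<bar> \<le> 1 + (2 * v + v^2)" by simp
    qed
    show "AE x in uniform01. mismatch_mgf v x \<le> 1 + (2 * v + v^2) * (x * (1 - x))"
      using AE_uniform01 by eventually_elim (use mismatch_mgf_le assms in auto)
  qed
  also have "\<dots> = 1 + (2 * v + v^2) / 6" by (rule integral_uniform01_quadratic)
  finally show ?thesis .
qed

lemma prob_space_S_measure: "prob_space (S_measure n)"
  unfolding S_measure_def by (rule prob_space_PiM) (rule prob_space_uniform01)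

lemma AE_S_measure_unit: "AE p in S_measure n. \<forall>k<n. 0 \<le> p k \<and> p k \<le> 1"
proof -
  have "\<forall>k\<in>{..<n}. AE p in S_measure n. 0 \<le> p k \<and> p k \<le> 1"
    unfolding S_measure_def by (intro ballI AE_PiM_component prob_space_uniform01 AE_uniform01) auto
  then have "AE p in S_measure n. \<forall>k\<in>{..<n}. 0 \<le> p k \<and> p k \<le> 1"
    by (subst AE_finite_all) auto
  then show ?thesis by auto
qed

lemma integral_prod_mismatch_mgf_le:
  assumes v: "0 \<le> v" "v \<le> 1" and J: "J \<subseteq> {..<n}"
  shows "(\<integral>p. (\<Prod>k\<in>J. mismatch_mgf v (p k)) \<partial>S_measure n) \<le> (1 + (2 * v + v^2) / 6) ^ card J"
proof -
  interpret product_prob_space "\<lambda>_. uniform01" "{..<n}"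
    by (rule product_prob_spaceI) (rule prob_space_uniform01)
  have JI: "{..<n} \<inter> {k. k \<in> J} = J" "{..<n} \<inter> J = J" using J by auto
  define f where "f = (\<lambda>i. if i \<in> J then mismatch_mgf v else (\<lambda>_. 1::real))"
  have "(\<integral>p. (\<Prod>k\<in>J. mismatch_mgf v (p k)) \<partial>S_measure n) = (\<integral>p. (\<Prod>i\<in>{..<n}. f i (p i)) \<partial>S_measure n)"
    by (simp add: f_def prod.If_cases JI if_distrib[of "\<lambda>g. g _"] cong: if_cong)
  also have "\<dots> = (\<Prod>i\<in>{..<n}. integral\<^sup>L uniform01 (f i))"
    unfolding S_measure_def
  proof (rule product_integral_prod)
    fix i show "integrable uniform01 (f i)"
      unfolding f_def
      by (cases "i \<in> J") (auto intro!: integrable_uniform01_bounded[where B=3] mismatch_mgf_measurable abs_mismatch_mgf_le v)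
  qed simp
  also have "\<dots> = (\<Prod>i\<in>J. \<integral>x. mismatch_mgf v x \<partial>uniform01)"
  proof -
    have "(\<Prod>i\<in>{..<n}. integral\<^sup>L uniform01 (f i)) = (\<Prod>i\<in>{..<n}. if i \<in> J then (\<integral>x. mismatch_mgf v x \<partial>uniform01) else 1)"
      by (rule prod.cong) (auto simp: f_def prob_space.prob_space[OF prob_space_uniform01])
    then show ?thesis by (simp add: prod.If_cases JI)
  qed
  also have "\<dots> \<le> (\<Prod>i\<in>J. 1 + (2 * v + v^2) / 6)"
  proof (rule prod_mono)
    fix i assume "i \<in> J"
    have "0 \<le> (\<integral>x. mismatch_mgf v x \<partial>uniform01)"
      by (rule integral_nonneg_AE) (use AE_uniform01 in \<open>eventually_elim, simp add: mismatch_mgf_def\<close>)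
    then show "0 \<le> (\<integral>x. mismatch_mgf v x \<partial>uniform01) \<and> (\<integral>x. mismatch_mgf v x \<partial>uniform01) \<le> 1 + (2 * v + v^2) / 6"
      using integral_mismatch_mgf_le[OF v] by simp
  qed
  also have "\<dots> = (1 + (2 * v + v^2) / 6) ^ card J" by simp
  finally show ?thesis .
qed

lemma integrable_prod_mismatch_mgf:
  assumes v: "0 \<le> v" "v \<le> 1" and J: "J \<subseteq> {..<n}"
  shows "integrable (S_measure n) (\<lambda>p. \<Prod>k\<in>J. mismatch_mgf v (p k))"
proof -
  interpret prob_space "S_measure n" by (rule prob_space_S_measure)
  show ?thesis
  proof (rule integrable_const_bound[where B="3 ^ card J"])
    show "AE p in S_measure n. norm (\<Prod>k\<in>J. mismatch_mgf v (p k)) \<le> 3 ^ card J"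
      using AE_S_measure_unit[of n]
    proof eventually_elim
      case (elim p)
      have "norm (\<Prod>k\<in>J. mismatch_mgf v (p k)) = (\<Prod>k\<in>J. \<bar>mismatch_mgf v (p k)\<bar>)" by (simp add: abs_prod)
      also have "\<dots> \<le> (\<Prod>k\<in>J. 3)" by (rule prod_mono) (use elim J v abs_mismatch_mgf_le in auto)
      finally show ?case by simp
    qed
    have "\<And>k. k \<in> J \<Longrightarrow> (\<lambda>p. mismatch_mgf v (p k)) \<in> borel_measurable (S_measure n)"
    proof -
      fix k assume "k \<in> J" then have kn: "k \<in> {..<n}" using J by auto
      have "(\<lambda>p. p k) \<in> borel_measurable (S_measure n)" unfolding S_measure_def using kn by measurable
      then show "(\<lambda>p. mismatch_mgf v (p k)) \<in> borel_measurable (S_measure n)"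
        using measurable_compose[OF _ mismatch_mgf_measurable] by blast
    qed
    then show "(\<lambda>p. \<Prod>k\<in>J. mismatch_mgf v (p k)) \<in> borel_measurable (S_measure n)"
      by (intro borel_measurable_prod) auto
  qed
qed

text \<open>Families of pmfs with a common finite support whose point probabilities depend measurably on
  the parameter; the probability of any event is then measurable in the parameter.\<close>
definition finite_pmf_family :: "'b measure \<Rightarrow> ('b \<Rightarrow> 'a pmf) \<Rightarrow> bool" where
  "finite_pmf_family M Q \<longleftrightarrow> (\<exists>Z. finite Z \<and> (\<forall>p. set_pmf (Q p) \<subseteq> Z)) \<and> (\<forall>z. (\<lambda>p. pmf (Q p) z) \<in> borel_measurable M)"

lemma finite_pmf_family_const: "finite (set_pmf q) \<Longrightarrow> finite_pmf_family M (\<lambda>p. q)"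
  unfolding finite_pmf_family_def by auto

lemma finite_pmf_family_return: "finite_pmf_family M (\<lambda>p. return_pmf x)"
  by (rule finite_pmf_family_const) simp

lemma finite_pmf_family_bind:
  assumes Q: "finite_pmf_family M Q" and F: "\<And>a. finite_pmf_family M (\<lambda>p. F p a)"
  shows "finite_pmf_family M (\<lambda>p. bind_pmf (Q p) (F p))"
proof -
  obtain Z where Z: "finite Z" "\<And>p. set_pmf (Q p) \<subseteq> Z" using Q unfolding finite_pmf_family_def by blast
  have "\<forall>a. \<exists>Z. finite Z \<and> (\<forall>p. set_pmf (F p a) \<subseteq> Z)" using F unfolding finite_pmf_family_def by blast
  then obtain g where g: "\<And>a. finite (g a)" "\<And>a p. set_pmf (F p a) \<subseteq> g a" by metis
  have fin: "finite (\<Union>a\<in>Z. g a)" using Z g by auto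
  have supp: "\<And>p. set_pmf (bind_pmf (Q p) (F p)) \<subseteq> (\<Union>a\<in>Z. g a)" using Z g by fastforce
  have pm: "\<And>p z. pmf (bind_pmf (Q p) (F p)) z = (\<Sum>a\<in>Z. pmf (Q p) a * pmf (F p a) z)"
  proof -
    fix p z
    have "pmf (bind_pmf (Q p) (F p)) z = (\<integral>a. pmf (F p a) z \<partial>Q p)" by (rule pmf_bind)
    also have "\<dots> = (\<Sum>a\<in>Z. pmf (Q p) a *\<^sub>R pmf (F p a) z)"
      by (rule integral_measure_pmf[OF Z(1)]) (use Z(2) in auto)
    finally show "pmf (bind_pmf (Q p) (F p)) z = (\<Sum>a\<in>Z. pmf (Q p) a * pmf (F p a) z)" by simp
  qed
  have "\<And>z. (\<lambda>p. pmf (bind_pmf (Q p) (F p)) z) \<in> borel_measurable M"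
  proof -
    fix z
    have m1: "\<And>a. (\<lambda>p. pmf (Q p) a) \<in> borel_measurable M" using Q unfolding finite_pmf_family_def by blast
    have m2: "\<And>a. (\<lambda>p. pmf (F p a) z) \<in> borel_measurable M" using F unfolding finite_pmf_family_def by blast
    show "(\<lambda>p. pmf (bind_pmf (Q p) (F p)) z) \<in> borel_measurable M"
      unfolding pm using m1 m2 by (intro borel_measurable_sum borel_measurable_times) auto
  qed
  then show ?thesis unfolding finite_pmf_family_def using fin supp by blast
qed

lemma finite_pmf_family_map: "finite_pmf_family M Q \<Longrightarrow> finite_pmf_family M (\<lambda>p. map_pmf f (Q p))"
  unfolding map_pmf_def by (rule finite_pmf_family_bind) (auto intro: finite_pmf_family_return)

lemma finite_pmf_family_pair: "finite_pmf_family M A \<Longrightarrow> finite_pmf_family M B \<Longrightarrow> finite_pmf_family M (\<lambda>p. pair_pmf (A p) (B p))"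
  unfolding pair_pmf_def by (intro finite_pmf_family_bind finite_pmf_family_return)

lemma finite_pmf_family_list: "(\<And>q. q \<in> set qs \<Longrightarrow> finite_pmf_family M q) \<Longrightarrow> finite_pmf_family M (\<lambda>p. list_pmf (map (\<lambda>q. q p) qs))"
proof (induction qs)
  case Nil then show ?case by (simp add: finite_pmf_family_return)
next
  case (Cons q qs)
  show ?case by (simp, intro finite_pmf_family_bind finite_pmf_family_return Cons.IH Cons.prems) auto
qed

context
begin

interpretation pmf_as_function .

lemma pmf_bernoulli_clamped:
  "pmf (bernoulli_pmf x) b = (if b then min 1 (max 0 x) else 1 - min 1 (max 0 x))"
  by transfer simp

end

lemma finite_pmf_family_bernoulli:
  assumes "f \<in> borel_measurable M"
  shows "finite_pmf_family M (\<lambda>p. bernoulli_pmf (f p))"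
proof -
  have "\<And>b. (\<lambda>p. pmf (bernoulli_pmf (f p)) b) \<in> borel_measurable M"
    unfolding pmf_bernoulli_clamped using assms by measurable
  moreover have "\<forall>p. set_pmf (bernoulli_pmf (f p)) \<subseteq> UNIV" by simp
  ultimately show ?thesis unfolding finite_pmf_family_def by (metis finite_UNIV finite_code)
qed

lemma measurable_prob_finite_pmf_family:
  assumes "finite_pmf_family M Q"
  shows "(\<lambda>p. measure_pmf.prob (Q p) A) \<in> borel_measurable M"
proof -
  obtain Z where Z: "finite Z" "\<And>p. set_pmf (Q p) \<subseteq> Z" using assms unfolding finite_pmf_family_def by blast
  have e: "\<And>p. measure_pmf.prob (Q p) A = (\<Sum>z\<in>A \<inter> Z. pmf (Q p) z)"
  proof -
    fix p
    have "measure_pmf.prob (Q p) A = measure_pmf.prob (Q p) (A \<inter> Z)"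
      by (rule measure_pmf.finite_measure_eq_AE) (use Z(2) in \<open>auto simp: AE_measure_pmf_iff\<close>)
    also have "\<dots> = (\<Sum>z\<in>A \<inter> Z. pmf (Q p) z)" by (rule measure_measure_pmf_finite) (use Z in auto)
    finally show "measure_pmf.prob (Q p) A = (\<Sum>z\<in>A \<inter> Z. pmf (Q p) z)" .
  qed
  show ?thesis unfolding e using assms unfolding finite_pmf_family_def by (intro borel_measurable_sum) auto
qed

lemma measurable_prob_algo_experiment:
  "(\<lambda>p. measure_pmf.prob (algo_experiment \<delta> n m p) A) \<in> borel_measurable (S_measure n)"
proof (rule measurable_prob_finite_pmf_family)
  have tr: "finite_pmf_family (S_measure n) (\<lambda>p. trace_pmf \<delta> n p)"
  proof -
    have "finite_pmf_family (S_measure n) (\<lambda>p. list_pmf (map (\<lambda>q. q p) (map (\<lambda>k p. pos_pmf \<delta> p k) [0..<n])))"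
    proof (rule finite_pmf_family_list)
      fix q assume "q \<in> set (map (\<lambda>k p. pos_pmf \<delta> p k) [0..<n])"
      then obtain k where k: "k < n" "q = (\<lambda>p. pos_pmf \<delta> p k)" by auto
      have kn: "k \<in> {..<n}" using k by simp
      have "(\<lambda>p. p k) \<in> borel_measurable (S_measure n)"
        unfolding S_measure_def using kn by measurable
      then show "finite_pmf_family (S_measure n) q" unfolding k pos_pmf_def
        by (intro finite_pmf_family_bind finite_pmf_family_bernoulli finite_pmf_family_return finite_pmf_family_const) auto
    qed
    then show ?thesis unfolding trace_pmf_def by (simp add: comp_def finite_pmf_family_map)
  qed
  have fs: "finite (set_pmf (pmf_of_set {0..n - 3 * win_len m}))" by simp
  show "finite_pmf_family (S_measure n) (algo_experiment \<delta> n m)"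
    unfolding algo_experiment_def
  proof (intro finite_pmf_family_bind finite_pmf_family_return)
    show "finite_pmf_family (S_measure n) (\<lambda>p. list_pmf (replicate (m^2) (pair_pmf (trace_pmf \<delta> n p) (pmf_of_set {0..n - 3 * win_len m}))))"
      using finite_pmf_family_list[of "replicate (m^2) (\<lambda>p. pair_pmf (trace_pmf \<delta> n p) (pmf_of_set {0..n - 3 * win_len m}))" "S_measure n"]
        finite_pmf_family_pair[OF tr finite_pmf_family_const[OF fs]] by simp
    show "\<And>XI. finite_pmf_family (S_measure n) (\<lambda>p. list_pmf (replicate (m^25) (trace_pmf \<delta> n p)))"
      using finite_pmf_family_list[of "replicate (m^25) (\<lambda>p. trace_pmf \<delta> n p)" "S_measure n"] tr by simp
  qed
qed

lemma prob_distant_matches_config_ge: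
  assumes p01: "\<And>k. k < n \<Longrightarrow> 0 \<le> p k \<and> p k \<le> 1" and d01: "0 \<le> \<delta>" "\<delta> \<le> 1" and u: "0 \<le> u"
    and w: "0 < w" and cs: "cs \<in> set_pmf (config_pmf \<delta> n p)"
    and few: "few_deletions K (3 * w + K + 1) cs" and typical: "typical_bits p (w + K) cs"
    and fits: "i + 3 * w \<le> length (config_trace cs)"
    and defective: "\<not> deletion_free w (window w (config_trace cs) (i + w))"
  shows "\<delta> ^ K * (1 - \<delta>) ^ (3 * w + K) * (1 - 2 * exp (- u * (5 * real w / 12) + (exp u - 1) * (3/8 * real (w + K))))
    \<le> measure_pmf.prob (trace_pmf \<delta> n p) {y. distant_matches w (config_trace cs) i y}"
proof -
  have n: "length cs = n" using cs by (rule length_in_set_config_pmf)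
  interpret config_chunk cs i w
    using fits w by unfold_locales (simp_all add: config_trace_def)
  show ?thesis using prob_distant_matches_ge[OF _ d01 u few typical defective] p01 n by simp
qed

lemma prob_all_chunks_deletion_free_ge:
  fixes m n :: nat and \<delta> u v :: real
  assumes p01: "\<And>k. k < n \<Longrightarrow> 0 \<le> p k \<and> p k \<le> 1" and d01: "0 \<le> \<delta>" "\<delta> \<le> 1"
    and w: "w = win_len m" "0 < w" and u: "0 \<le> u" and v: "0 \<le> v"
    and G: "G = \<delta> ^ K * (1 - \<delta>) ^ (3 * w + K)
      * (1 - 2 * exp (- u * (5 * real w / 12) + (exp u - 1) * (3/8 * real (w + K))))" "G \<le> 1"
  shows "1 - real (m^2) * ((1 - G) ^ (m^25) + real n * (real ((3 * w + K + 1) choose (K + 1)) * \<delta> ^ (K + 1))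
      + (\<Sum>s<n. exp (- v * (3/8 * real (w + K))) * (\<Prod>k | s \<le> k \<and> k < s + (w + K) \<and> k < n. mismatch_mgf v (p k))))
    \<le> measure_pmf.prob (algo_experiment \<delta> n m p) {(XI, Y). all_chunks_deletion_free (win_len m) XI Y}"
proof -
  let ?E = "algo_experiment \<delta> n m p"
  let ?C = "config_pmf \<delta> n p"
  define good where "good cs \<longleftrightarrow> few_deletions K (3 * w + K + 1) cs \<and> typical_bits p (w + K) cs" for cs
  have "measure_pmf.prob ?C {cs. \<not> good cs}
      \<le> measure_pmf.prob ?C {cs. \<not> few_deletions K (3 * w + K + 1) cs}
        + measure_pmf.prob ?C {cs. \<not> typical_bits p (w + K) cs}"
    using measure_Un_le[of "{cs. \<not> few_deletions K (3 * w + K + 1) cs}" ?C "{cs. \<not> typical_bits p (w + K) cs}"]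
    by (simp add: good_def Un_def)
  also have "\<dots> \<le> real n * (real ((3 * w + K + 1) choose (K + 1)) * \<delta> ^ (K + 1))
      + (\<Sum>s<n. exp (- v * (3/8 * real (w + K))) * (\<Prod>k | s \<le> k \<and> k < s + (w + K) \<and> k < n. mismatch_mgf v (p k)))"
    by (intro add_mono prob_not_few_deletions_le[OF p01 d01] prob_not_typical_bits_le[OF p01 d01 v])
  finally have atypical: "measure_pmf.prob ?C {cs. \<not> good cs} \<le> \<dots>" .
  have "measure_pmf.prob ?E {(XI, Y). \<not> all_chunks_deletion_free w XI Y}
      \<le> real (m^2) * measure_pmf.prob (pair_pmf (pair_pmf (trace_pmf \<delta> n p) (pmf_of_set {0..n - 3 * w}))
          (list_pmf (replicate (m^25) (trace_pmf \<delta> n p)))) {(z, Y). bad_return w z Y}"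
    unfolding algo_experiment_def w(1)[symmetric] by (rule prob_not_all_chunks_deletion_free_le)
  also have "\<dots> \<le> real (m^2) * ((1 - G) ^ (m^25) + measure_pmf.prob ?C {cs. \<not> good cs})"
    using prob_distant_matches_config_ge[OF p01 d01 u w(2)] G
    by (intro mult_left_mono prob_bad_return_le) (auto simp: good_def)
  also have "\<dots> \<le> real (m^2) * ((1 - G) ^ (m^25) + real n * (real ((3 * w + K + 1) choose (K + 1)) * \<delta> ^ (K + 1))
      + (\<Sum>s<n. exp (- v * (3/8 * real (w + K))) * (\<Prod>k | s \<le> k \<and> k < s + (w + K) \<and> k < n. mismatch_mgf v (p k))))"
    using atypical unfolding add.assoc by (intro mult_left_mono add_left_mono) auto
  finally have "measure_pmf.prob ?E {(XI, Y). \<not> all_chunks_deletion_free w XI Y} \<le> \<dots>" .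
  moreover have "measure_pmf.prob ?E {(XI, Y). all_chunks_deletion_free w XI Y}
      = 1 - measure_pmf.prob ?E {(XI, Y). \<not> all_chunks_deletion_free w XI Y}"
    using measure_pmf.prob_compl[of "{(XI, Y). all_chunks_deletion_free w XI Y}" ?E]
    by (simp add: Compl_eq_Diff_UNIV[symmetric] Collect_neg_eq[symmetric] case_prod_unfold)
  ultimately show ?thesis unfolding w(1)[symmetric] by linarith
qed

lemma integral_window_mgf_le:
  assumes v: "0 \<le> v" "v \<le> 1"
  shows "(\<integral>p. (\<Prod>k | s \<le> k \<and> k < s + N \<and> k < n. mismatch_mgf v (p k)) \<partial>S_measure n)
    \<le> (1 + (2 * v + v^2) / 6) ^ N"
proof -
  have "card {k. s \<le> k \<and> k < s + N \<and> k < n} \<le> card {s..<s + N}" by (intro card_mono) auto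
  then have "(1 + (2 * v + v^2) / 6) ^ card {k. s \<le> k \<and> k < s + N \<and> k < n} \<le> (1 + (2 * v + v^2) / 6) ^ N"
    using v by (intro power_increasing) auto
  moreover have "{k. s \<le> k \<and> k < s + N \<and> k < n} \<subseteq> {..<n}" by auto
  ultimately show ?thesis using integral_prod_mismatch_mgf_le[OF v] order_trans by blast
qed

lemma integral_prob_all_chunks_deletion_free_ge:
  fixes m n :: nat and \<delta> u v :: real
  assumes d01: "0 \<le> \<delta>" "\<delta> \<le> 1"
    and w: "w = win_len m" "0 < w" and u: "0 \<le> u" and v: "0 \<le> v" "v \<le> 1"
    and G: "G = \<delta> ^ K * (1 - \<delta>) ^ (3 * w + K)
      * (1 - 2 * exp (- u * (5 * real w / 12) + (exp u - 1) * (3/8 * real (w + K))))" "G \<le> 1"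
  shows "1 - real (m^2) * ((1 - G) ^ (m^25) + real n * (real ((3 * w + K + 1) choose (K + 1)) * \<delta> ^ (K + 1))
      + real n * (exp (- v * (3/8 * real (w + K))) * (1 + (2 * v + v^2) / 6) ^ (w + K)))
    \<le> (\<integral>p. measure_pmf.prob (algo_experiment \<delta> n m p)
          {(XI, Y). all_chunks_deletion_free (win_len m) XI Y} \<partial>S_measure n)"
proof -
  interpret prob_space "S_measure n" by (rule prob_space_S_measure)
  define F where "F p = measure_pmf.prob (algo_experiment \<delta> n m p)
    {(XI, Y). all_chunks_deletion_free (win_len m) XI Y}" for p
  define A where "A = (1 - G) ^ (m^25) + real n * (real ((3 * w + K + 1) choose (K + 1)) * \<delta> ^ (K + 1))"
  define e where "e = exp (- v * (3/8 * real (w + K)))"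
  define P where "P s p = (\<Prod>k | s \<le> k \<and> k < s + (w + K) \<and> k < n. mismatch_mgf v (p k))" for s p
  have intP: "integrable (S_measure n) (P s)" for s
    unfolding P_def by (rule integrable_prod_mismatch_mgf[OF v]) auto
  have intF: "integrable (S_measure n) F"
    unfolding F_def[abs_def]
    by (rule integrable_const_bound[where B=1]) (auto intro: measurable_prob_algo_experiment)
  have "AE p in S_measure n. 1 - real (m^2) * (A + (\<Sum>s<n. e * P s p)) \<le> F p"
    using AE_S_measure_unit[of n]
  proof eventually_elim
    case (elim p)
    show ?case unfolding F_def A_def e_def P_def
      by (rule prob_all_chunks_deletion_free_ge[OF _ d01 w u v(1) G]) (use elim in auto)
  qed
  then have "(\<integral>p. 1 - real (m^2) * (A + (\<Sum>s<n. e * P s p)) \<partial>S_measure n) \<le> (\<integral>p. F p \<partial>S_measure n)"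
    using intP by (intro integral_mono_AE[OF _ intF]) auto
  moreover have "(\<integral>p. 1 - real (m^2) * (A + (\<Sum>s<n. e * P s p)) \<partial>S_measure n)
      = 1 - real (m^2) * (A + (\<Sum>s<n. e * (\<integral>p. P s p \<partial>S_measure n)))"
    using intP by (simp add: prob_space integral_sum)
  moreover have "(\<Sum>s<n. e * (\<integral>p. P s p \<partial>S_measure n)) \<le> real n * (e * (1 + (2 * v + v^2) / 6) ^ (w + K))"
    using sum_mono[of "{..<n}" "\<lambda>s. e * (\<integral>p. P s p \<partial>S_measure n)" "\<lambda>_. e * (1 + (2 * v + v^2) / 6) ^ (w + K)"]
      integral_window_mgf_le[OF v] by (simp add: P_def e_def)
  ultimately show ?thesis unfolding F_def A_def e_def
    by (smt (verit) mult_left_mono of_nat_0_le_iff)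
qed

section \<open>Numerical estimates\<close>

lemma exp_14_le: "exp (14::real) \<le> 10^7"
proof -
  have "exp (14::real) = exp 1 ^ 14" by (simp add: exp_of_nat_mult[symmetric])
  also have "\<dots> \<le> 3 ^ 14" by (rule power_mono) (use exp_le in auto)
  finally show ?thesis by simp
qed

lemma exp_10_ge: "(13000::real) \<le> exp 10"
proof -
  have "(13000::real) \<le> (1 + 10 / real 100) ^ 100" by (simp add: power_divide)
  also have "\<dots> \<le> exp 10" by (rule exp_ge_one_plus_x_over_n_power_n) auto
  finally show ?thesis .
qed

lemma one_plus_power_le_exp: "0 \<le> (x::real) \<Longrightarrow> (1 + x) ^ k \<le> exp (real k * x)"
  using power_mono[of "1 + x" "exp x" k] exp_ge_add_one_self[of x]
  by (simp add: exp_of_nat_mult add.commute)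

lemma exp_neg_two_le_one_minus: "0 \<le> (\<delta>::real) \<Longrightarrow> \<delta> \<le> 1/2 \<Longrightarrow> exp (- 2 * \<delta>) \<le> 1 - \<delta>"
proof -
  assume d: "0 \<le> \<delta>" "\<delta> \<le> 1/2"
  have "1 + 2 * \<delta> \<le> exp (2 * \<delta>)" by (rule exp_ge_add_one_self)
  then have "exp (- 2 * \<delta>) \<le> 1 / (1 + 2 * \<delta>)" using d by (simp add: exp_minus field_simps)
  also have "\<dots> \<le> 1 - \<delta>" using d mult_left_mono[of "\<delta> * 2" 1 \<delta>] by (simp add: field_simps)
  finally show ?thesis .
qed

lemma binomial_mult_power_le:
  assumes "0 \<le> (\<rho>::real)" "k \<le> N"
  shows "real (N choose k) * \<rho> ^ k \<le> (1 + \<rho>) ^ N"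
proof -
  have "real (N choose k) * \<rho> ^ k * 1 ^ (N - k) \<le> (\<Sum>i\<le>N. real (N choose i) * \<rho> ^ i * 1 ^ (N - i))"
    by (rule member_le_sum) (use assms in auto)
  also have "\<dots> = (\<rho> + 1) ^ N" by (rule binomial_ring[symmetric])
  finally show ?thesis by (simp add: add.commute)
qed

lemma neg_ln_ge_14:
  fixes \<delta> :: real
  assumes "0 < \<delta>" "\<delta> < 1 / 10^7"
  shows "14 \<le> - ln \<delta>"
proof -
  have "ln (exp 14) \<le> ln (10^7::real)" using exp_14_le by (subst ln_le_cancel_iff) auto
  moreover have "ln \<delta> \<le> ln (1 / 10^7)" using assms by simp
  ultimately show ?thesis by (simp add: ln_div)
qed

text \<open>With \<open>l = ln m\<close>, \<open>\<delta>^(K+1) \<le> m^-24 \<le> \<delta>^K\<close>: \<open>K\<close> is the number of deletions tolerated near a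
  chunk.\<close>
lemma deletion_budget:
  assumes d: "0 \<le> \<delta>" "\<delta> < 1 / 10^7" and l: "0 \<le> l"
  obtains K :: nat where "real K \<le> 24 * l / 14" "exp (- 24 * l) \<le> \<delta> ^ K" "\<delta> ^ (K + 1) \<le> exp (- 24 * l)"
proof (cases "\<delta> = 0")
  case True
  then show ?thesis using that[of 0] l by simp
next
  case False
  define L where "L = - ln \<delta>"
  define K where "K = nat \<lfloor>24 * l / L\<rfloor>"
  have L: "14 \<le> L" using neg_ln_ge_14 d False by (simp add: L_def)
  have "real K = of_int \<lfloor>24 * l / L\<rfloor>" using l L by (simp add: K_def)
  then have K: "real K \<le> 24 * l / L" "24 * l / L < real K + 1" by linarith+
  have power: "\<delta> ^ k = exp (- (real k * L))" for k
    using exp_of_nat_mult[of k "ln \<delta>"] d False by (simp add: L_def)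
  show ?thesis
  proof (rule that[of K])
    have "24 * l / L \<le> 24 * l / 14" by (rule divide_left_mono) (use L l in auto)
    then show "real K \<le> 24 * l / 14" using K by linarith
    show "exp (- 24 * l) \<le> \<delta> ^ K" unfolding power using K L by (simp add: field_simps)
    show "\<delta> ^ (K + 1) \<le> exp (- 24 * l)" unfolding power using K L by (simp add: field_simps)
  qed
qed

lemma sq_mult_le_exp:
  assumes "real m = exp l" "n \<le> m"
  shows "real (m^2) * real n \<le> exp (3 * l)"
proof -
  have "real (m^2) * real n \<le> real (m^2) * real m" using assms(2) by (intro mult_left_mono) auto
  also have "\<dots> = exp l ^ 3" using assms(1) by (simp add: power2_eq_square power3_eq_cube)
  also have "\<dots> = exp (3 * l)" using exp_of_nat_mult[of 3 l] by simp
  finally show ?thesis .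
qed

lemma typicality_failure_le:
  assumes l: "100 \<le> l" and m: "real m = exp l" and n: "n \<le> m" and N: "10000 * l \<le> real N"
  shows "real (m^2) * (real n * (exp (- (1/8) * (3/8 * real N)) * (1 + (2 * (1/8) + (1/8)^2) / 6) ^ N))
    \<le> exp (- l)"
proof -
  have "(1 + (2 * (1/8) + (1/8)^2) / 6) ^ N \<le> exp (real N * ((2 * (1/8) + (1/8)^2) / (6::real)))"
    by (rule one_plus_power_le_exp) simp
  then have "exp (- (1/8) * (3/8 * real N)) * (1 + (2 * (1/8) + (1/8)^2) / 6) ^ N
      \<le> exp (- (1/8) * (3/8 * real N)) * exp (real N * ((2 * (1/8) + (1/8)^2) / 6))"
    by (rule mult_left_mono) simp
  also have "\<dots> = exp (- real N / 384)"
    unfolding exp_add[symmetric] by (simp add: field_simps power2_eq_square)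
  finally have "real (m^2) * real n * (exp (- (1/8) * (3/8 * real N)) * (1 + (2 * (1/8) + (1/8)^2) / 6) ^ N)
      \<le> exp (3 * l) * exp (- real N / 384)"
    using sq_mult_le_exp[OF m n] by (intro mult_mono) auto
  also have "\<dots> \<le> exp (- l)" using N l by (simp flip: exp_add)
  finally show ?thesis by (simp add: mult.assoc)
qed

lemma binomial_deletions_le:
  assumes l: "100 \<le> l" and w: "real w \<le> 10000 * l + 1" and K: "real K \<le> 24 * l / 14"
    and d: "0 \<le> \<delta>" "\<delta> ^ (K + 1) \<le> exp (- 24 * l)"
  shows "real ((3 * w + K + 1) choose (K + 1)) * \<delta> ^ (K + 1) \<le> exp (- 4 * l)"
proof -
  define N where "N = 3 * w + K + 1"
  define \<rho> where "\<rho> = exp (- 10::real)"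
  have \<rho>: "0 < \<rho>" "\<rho> \<le> 1 / 13000" using exp_10_ge by (simp_all add: \<rho>_def exp_minus field_simps)
  have "real (N choose (K + 1)) \<le> (1 + \<rho>) ^ N / \<rho> ^ (K + 1)"
    using binomial_mult_power_le[of \<rho> "K + 1" N] \<rho> by (simp add: N_def field_simps)
  also have "\<dots> \<le> exp (real N * \<rho>) / \<rho> ^ (K + 1)"
    using one_plus_power_le_exp[of \<rho> N] \<rho> by (intro divide_right_mono) auto
  also have "\<dots> = exp (real N * \<rho> + 10 * real (K + 1))"
  proof -
    have rk: "1 / \<rho> ^ (K + 1) = exp (10 * real (K + 1))"
      by (simp add: \<rho>_def exp_minus exp_of_nat_mult[symmetric] exp_add field_simps)
    have "exp (real N * \<rho>) / \<rho> ^ (K + 1) = exp (real N * \<rho>) * (1 / \<rho> ^ (K + 1))" by simp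
    also have "\<dots> = exp (real N * \<rho> + 10 * real (K + 1))" unfolding rk by (simp only: exp_add)
    finally show ?thesis .
  qed
  finally have "real (N choose (K + 1)) * \<delta> ^ (K + 1) \<le> exp (real N * \<rho> + 10 * real (K + 1)) * exp (- 24 * l)"
    using d by (intro mult_mono) auto
  also have "\<dots> \<le> exp (- 4 * l)"
  proof -
    have "real N \<le> 30002 * l" using w K l by (simp add: N_def)
    then have "real N * \<rho> \<le> 30002 * l * (1 / 13000)" using \<rho> l by (intro mult_mono) auto
    then show ?thesis using K l by (simp flip: exp_add)
  qed
  finally show ?thesis unfolding N_def .
qed

lemma deletion_failure_le:
  assumes l: "100 \<le> l" and m: "real m = exp l" and n: "n \<le> m"
    and w: "real w \<le> 10000 * l + 1" and K: "real K \<le> 24 * l / 14"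
    and d: "0 \<le> \<delta>" "\<delta> ^ (K + 1) \<le> exp (- 24 * l)"
  shows "real (m^2) * (real n * (real ((3 * w + K + 1) choose (K + 1)) * \<delta> ^ (K + 1))) \<le> exp (- l)"
proof -
  have "real (m^2) * real n * (real ((3 * w + K + 1) choose (K + 1)) * \<delta> ^ (K + 1)) \<le> exp (3 * l) * exp (- 4 * l)"
    using sq_mult_le_exp[OF m n] binomial_deletions_le[OF l w K d] d by (intro mult_mono) auto
  then show ?thesis by (simp add: mult.assoc flip: exp_add)
qed

lemma chernoff_term_le:
  assumes l: "100 \<le> l" and w: "10000 * l \<le> real w" and K: "real K \<le> 24 * l / 14"
  shows "exp (- (1/18) * (5 * real w / 12) + (exp (1/18) - 1) * (3/8 * real (w + K))) \<le> 1/4"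
proof -
  have "exp (1/18::real) - 1 \<le> 1/18 + 1/324"
    using exp_bound[of "1/18::real"] by (simp add: power2_eq_square)
  then have "- (1/18) * (5 * real w / 12) + (exp (1/18) - 1) * (3/8 * real (w + K))
      \<le> - (1/18) * (5 * real w / 12) + (1/18 + 1/324) * (3/8 * real (w + K))"
    by (intro add_left_mono mult_right_mono) auto
  also have "\<dots> \<le> -2" using w K l by (simp add: field_simps)
  finally have "exp (- (1/18) * (5 * real w / 12) + (exp (1/18) - 1) * (3/8 * real (w + K))) \<le> exp (-2)"
    by simp
  also have "exp (-2::real) \<le> 1/4"
  proof -
    have "(2::real) \<le> exp 1" using exp_ge_add_one_self[of "1::real"] by simp
    then have "2^2 \<le> exp (1::real) ^ 2" by (rule power_mono) simp
    then have "4 \<le> exp (2::real)" by (simp add: exp_of_nat_mult[symmetric])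
    then show ?thesis by (simp add: exp_minus field_simps)
  qed
  finally show ?thesis .
qed

lemma survival_prob_ge:
  assumes l: "100 \<le> l" and w: "real w \<le> 10000 * l + 1" and K: "real K \<le> 24 * l / 14"
    and d: "0 \<le> \<delta>" "\<delta> < 1 / 10^7"
  shows "exp (- l / 100) \<le> (1 - \<delta>) ^ (3 * w + K)"
proof -
  have "real (3 * w + K) \<le> 30002 * l" using w K l by simp
  then have "2 * \<delta> * real (3 * w + K) \<le> 2 * (1 / 10^7) * (30002 * l)"
    using d l by (intro mult_mono) auto
  also have "\<dots> \<le> l / 100" using l by simp
  finally have "- l / 100 \<le> real (3 * w + K) * (- 2 * \<delta>)" by (simp add: algebra_simps)
  then have "exp (- l / 100) \<le> exp (- 2 * \<delta>) ^ (3 * w + K)"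
    by (simp add: exp_of_nat_mult[symmetric])
  also have "\<dots> \<le> (1 - \<delta>) ^ (3 * w + K)"
    by (rule power_mono) (use exp_neg_two_le_one_minus[of \<delta>] d in auto)
  finally show ?thesis .
qed

lemma witness_prob_ge:
  assumes l: "100 \<le> l" and w: "10000 * l \<le> real w" "real w \<le> 10000 * l + 1"
    and K: "real K \<le> 24 * l / 14" and d: "0 \<le> \<delta>" "\<delta> < 1 / 10^7" and dK: "exp (- 24 * l) \<le> \<delta> ^ K"
  shows "exp (- 24 * l) * exp (- l / 100) / 2
    \<le> \<delta> ^ K * (1 - \<delta>) ^ (3 * w + K)
      * (1 - 2 * exp (- (1/18) * (5 * real w / 12) + (exp (1/18) - 1) * (3/8 * real (w + K))))"
proof -
  have "exp (- 24 * l) * exp (- l / 100) * (1/2)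
    \<le> \<delta> ^ K * (1 - \<delta>) ^ (3 * w + K)
      * (1 - 2 * exp (- (1/18) * (5 * real w / 12) + (exp (1/18) - 1) * (3/8 * real (w + K))))"
    using dK survival_prob_ge[OF l w(2) K d] chernoff_term_le[OF l w(1) K] d by (intro mult_mono) auto
  then show ?thesis by simp
qed

lemma witness_prob_le_1:
  fixes \<delta> x :: real
  assumes "0 \<le> \<delta>" "\<delta> \<le> 1"
  shows "\<delta> ^ K * (1 - \<delta>) ^ N * (1 - 2 * exp x) \<le> 1"
proof -
  have "0 \<le> \<delta> ^ K * (1 - \<delta>) ^ N" using assms by (intro mult_nonneg_nonneg zero_le_power) auto
  moreover have "\<delta> ^ K * (1 - \<delta>) ^ N \<le> 1" using assms by (simp add: mult_le_one power_le_one)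
  moreover have "1 - 2 * exp x \<le> 1" by simp
  ultimately show ?thesis by (smt (verit) mult_le_one mult_nonneg_nonpos)
qed

lemma six_mult_le_exp: "100 \<le> (l::real) \<Longrightarrow> 6 * l \<le> exp (99 * l / 100)"
proof -
  assume l: "100 \<le> l"
  have "100 * l \<le> l * l" using mult_right_mono[of 100 l l] l by simp
  moreover have "(1 + 99 * l / 200)^2 = 1 + 99 * l / 100 + 9801 * (l * l) / 40000"
    by (simp add: power2_eq_square field_simps)
  ultimately have "6 * l \<le> (1 + 99 * l / 200)^2" using l by linarith
  also have "\<dots> \<le> exp (99 * l / 200) ^ 2"
    using exp_ge_add_one_self[of "99 * l / 200"] l by (intro power_mono) auto
  also have "\<dots> = exp (99 * l / 100)" by (simp add: exp_of_nat_mult[symmetric])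
  finally show ?thesis .
qed

lemma retry_failure_le:
  assumes l: "100 \<le> l" and m: "real m = exp l"
    and G: "exp (- 24 * l) * exp (- l / 100) / 2 \<le> G" "G \<le> 1"
  shows "real (m^2) * (1 - G) ^ (m^25) \<le> exp (- l)"
proof -
  have M: "real (m^25) = exp (25 * l)" "real (m^2) = exp (2 * l)"
    using m exp_of_nat_mult[of 25 l] exp_of_nat_mult[of 2 l] by simp_all
  have "(1 - G) ^ (m^25) \<le> exp (- G) ^ (m^25)"
    by (rule power_mono) (use G exp_ge_add_one_self[of "- G"] in auto)
  also have "\<dots> = exp (- G * exp (25 * l))"
    using exp_of_nat_mult[of "m^25" "- G"] M by (simp add: mult.commute)
  also have "\<dots> \<le> exp (- (exp (- 24 * l) * exp (- l / 100) / 2) * exp (25 * l))"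
    using G by simp
  also have "\<dots> = exp (- exp (99 * l / 100) / 2)"
    by (simp add: exp_add[symmetric] field_simps)
  finally have "real (m^2) * (1 - G) ^ (m^25) \<le> exp (2 * l) * exp (- exp (99 * l / 100) / 2)"
    unfolding M by (intro mult_left_mono) auto
  also have "\<dots> \<le> exp (- l)" using six_mult_le_exp[OF l] by (simp flip: exp_add)
  finally show ?thesis .
qed

lemma exp_20_powr_ge_1:
  fixes x :: real
  assumes "0 < x" "ln x < 100"
  shows "1 \<le> exp 20 * x powr (-1/5)"
  using assms by (simp add: powr_def flip: exp_add)

lemma three_exp_neg_ln_le_powr:
  fixes x :: real
  assumes "0 < x" "100 \<le> ln x"
  shows "3 * exp (- ln x) \<le> exp 20 * x powr (-1/5)"
proof -
  have "3 \<le> exp (4 * ln x / 5)" using assms exp_ge_add_one_self[of "4 * ln x / 5"] by linarith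
  then have "3 * exp (- ln x) \<le> exp (4 * ln x / 5) * exp (- ln x)" by simp
  also have "\<dots> \<le> exp 20 * x powr (-1/5)" using assms by (simp add: powr_def flip: exp_add)
  finally show ?thesis .
qed

lemma integral_prob_all_chunks_deletion_free_large:
  fixes n m :: nat and \<delta> :: real
  assumes nm: "n < m" and d: "0 \<le> \<delta>" "\<delta> < 1 / 10^7" and l: "100 \<le> ln (real m)"
  shows "1 - 3 * exp (- ln (real m))
    \<le> (\<integral>p. measure_pmf.prob (algo_experiment \<delta> n m p)
          {(XI, Y). all_chunks_deletion_free (win_len m) XI Y} \<partial>S_measure n)"
proof -
  define l where "l = ln (real m)"
  define w where "w = win_len m"
  have ml: "real m = exp l" using nm by (simp add: l_def)
  have "real w = of_int \<lceil>10000 * l\<rceil>" using l by (simp add: w_def win_len_def l_def)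
  then have w1: "10000 * l \<le> real w" "real w \<le> 10000 * l + 1" by linarith+
  have "0 \<le> l" using l by (simp add: l_def)
  then obtain K where K: "real K \<le> 24 * l / 14" "exp (- 24 * l) \<le> \<delta> ^ K" "\<delta> ^ (K + 1) \<le> exp (- 24 * l)"
    using deletion_budget[OF d] by blast
  \<comment> \<open>the Chernoff parameters are \<open>1/18\<close> for the mismatches of a witness and \<open>1/8\<close> for typicality\<close>
  define G where "G = \<delta> ^ K * (1 - \<delta>) ^ (3 * w + K)
    * (1 - 2 * exp (- (1/18) * (5 * real w / 12) + (exp (1/18) - 1) * (3/8 * real (w + K))))"
  have G: "exp (- 24 * l) * exp (- l / 100) / 2 \<le> G" "G \<le> 1"
    using witness_prob_ge[OF _ w1 K(1) d K(2)] witness_prob_le_1[of \<delta>] l d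
    by (simp_all add: G_def l_def)
  have "1 - real (m^2) * ((1 - G) ^ (m^25) + real n * (real ((3 * w + K + 1) choose (K + 1)) * \<delta> ^ (K + 1))
      + real n * (exp (- (1/8) * (3/8 * real (w + K))) * (1 + (2 * (1/8) + (1/8)^2) / 6) ^ (w + K)))
    \<le> (\<integral>p. measure_pmf.prob (algo_experiment \<delta> n m p)
          {(XI, Y). all_chunks_deletion_free (win_len m) XI Y} \<partial>S_measure n)"
    using w1 l d by (intro integral_prob_all_chunks_deletion_free_ge[OF _ _ w_def _ _ _ _ G_def G(2)])
      (auto simp: l_def)
  moreover have "real (m^2) * (1 - G) ^ (m^25) \<le> exp (- l)"
    using retry_failure_le[OF _ ml G] l by (simp add: l_def)
  moreover have "real (m^2) * (real n * (real ((3 * w + K + 1) choose (K + 1)) * \<delta> ^ (K + 1))) \<le> exp (- l)"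
    using deletion_failure_le[OF _ ml _ w1(2) K(1) d(1) K(3)] l nm by (simp add: l_def)
  moreover have "real (m^2) * (real n * (exp (- (1/8) * (3/8 * real (w + K)))
      * (1 + (2 * (1/8) + (1/8)^2) / 6) ^ (w + K))) \<le> exp (- l)"
    using typicality_failure_le[OF _ ml, of n "w + K"] w1(1) l nm by (simp add: l_def)
  ultimately show ?thesis unfolding l_def[symmetric] by (simp add: distrib_left)
qed

theorem lemma11:
  shows "\<exists>C::real. \<forall>(n::nat) (m::nat) (\<delta>::real).
           n < m \<and> 0 \<le> \<delta> \<and> \<delta> < 1 / 10 ^ 7 \<longrightarrow>
           (\<integral>p. measure_pmf.prob (algo_experiment \<delta> n m p)
                 {(XI, Y). all_chunks_deletion_free (win_len m) XI Y} \<partial>S_measure n)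
             \<ge> 1 - C * real m powr (-1/5)"
proof (intro exI[of _ "exp 20"] allI impI, elim conjE)
  fix n m :: nat and \<delta> :: real
  assume nm: "n < m" and d: "0 \<le> \<delta>" "\<delta> < 1 / 10 ^ 7"
  let ?F = "\<integral>p. measure_pmf.prob (algo_experiment \<delta> n m p)
    {(XI, Y). all_chunks_deletion_free (win_len m) XI Y} \<partial>S_measure n"
  have m: "0 < real m" using nm by simp
  show "1 - exp 20 * real m powr (-1/5) \<le> ?F"
  proof (cases "ln (real m) < 100")
    case True
    have "0 \<le> ?F" by (rule integral_nonneg_AE) auto
    then show ?thesis using exp_20_powr_ge_1[OF m True] by linarith
  next
    case False
    then show ?thesis
      using integral_prob_all_chunks_deletion_free_large[OF nm d] three_exp_neg_ln_le_powr[OF m] by simp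
  qed
qed

end
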